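(* Let $\mathcal P$ and $\mathcal Q$ be down-right paths with $\mathcal Q$ above $\mathcal P$. (1) If the initial free energies $(h(\mathbf p_j))_{0\le j\le N}$ are distributed according to the (infinite) measure $\mathrm{wt}^{\mathcal P}(\boldsymbol\lambda_1)d\boldsymbol\lambda_1$ on $\mathbb R^{N+1}$, then $(h(\mathbf q_j))_{0\le j\le N}$ is distributed according to $\mathrm{wt}^{\mathcal Q}(\boldsymbol\lambda_1')d\boldsymbol\lambda_1'$; that is, for every measurable $F:\mathbb R^{N+1}\to[0,\infty]$, $\int_{\mathbb R^{N+1}}\mathbb E\big[F((h(\mathbf q_j))_j)\,\big|\,h(\mathbf p_j)=\lambda_1^{(j)}\ \forall j\big]\mathrm{wt}^{\mathcal P}(\boldsymbol\lambda_1)d\boldsymbol\lambda_1=\int_{\mathbb R^{N+1}}F(\boldsymbol\lambda_1')\mathrm{wt}^{\mathcal Q}(\boldsymbol\lambda_1')d\boldsymbol\lambda_1'$. (2) Assume moreover $u+v>0$. If $\mathbf L_1\in\mathbb R^N$ has density $\mathrm P^{\mathcal P}_{\mathrm{LG}}$ and the polymer is started from $h(\mathbf p_0)=0$, $h(\mathbf p_j)=L_1(j)$, then $(h(\mathbf q_j)-h(\mathbf q_0))_{1\le j\le N}$ has density $\mathrm P^{\mathcal Q}_{\mathrm{LG}}$.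
   Context: Fix $N\ge1$ and $\alpha_1,\dots,\alpha_N,u,v\in\mathbb R$ with $\alpha_i+\alpha_j>0$, $\alpha_i+u>0$, $\alpha_i+v>0$; extend $\alpha_{j+kN}=\alpha_j$. Strip $\{(n,m):0\le m\le n\le m+N\}$; independent weights $\varpi_{n,m}\sim\Gamma^{-1}(\alpha_n+\alpha_m)$ for $0\le m<n<m+N$, $\varpi_{m,m}\sim\Gamma^{-1}(\alpha_m+u)$, $\varpi_{m+N,m}\sim\Gamma^{-1}(\alpha_m+v)$ ($\Gamma^{-1}(\theta)$ has density $x^{-\theta-1}e^{-1/x}/\Gamma(\theta)$ on $(0,\infty)$). A down-right path: strip vertices $\mathbf p_0=(m_0,m_0),\dots,\mathbf p_N$ with steps in $\{(1,0),(0,-1)\}$; edge $\mathsf e_j$ ($\mathbf p_{j-1}\to\mathbf p_j$) has label $\ell_j=\alpha_n$ if horizontal $(n-1,m)\to(n,m)$, $\ell_j=\alpha_m$ if vertical between $(n,m-1),(n,m)$. A vertex is above $\mathcal P$ if reachable from $\mathcal P$ by an up-right path in the strip; $\mathcal Q$ (vertices $\mathbf q_j$) is above $\mathcal P$ if all its vertices are on or above $\mathcal P$. Given $z(\mathbf p_j)=e^{h(\mathbf p_j)}$ (independent of the weights), for $(n,m)$ above $\mathcal P$, $z(n,m)=\sum_\pi z(\pi(0))\prod_{i=1}^{\ell}\varpi_{\pi(i)}$ over up-right paths in the strip from $\pi(0)\in\mathcal P$ to $(n,m)$ touching $\mathcal P$ only at $\pi(0)$; $h=\log z$. Two-layer weight: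 $(\mathrm{up}(j),\mathrm{low}(j))=(j,j-1)$ if $\mathsf e_j$ horizontal, $(j-1,j)$ if vertical; $f_\theta(x)=e^{-\theta x-e^{-x}}$; for $\boldsymbol\lambda=(\boldsymbol\lambda_1,\boldsymbol\lambda_2)$, $\boldsymbol\lambda_i=(\lambda_i^{(0)},\dots,\lambda_i^{(N)})\in\mathbb R^{N+1}$, $\mathrm{wt}^{\mathcal{GP}}(\boldsymbol\lambda)=e^{-u(\lambda_1^{(0)}-\lambda_2^{(0)})-v(\lambda_1^{(N)}-\lambda_2^{(N)})}\prod_{j=1}^N\big[\prod_{i=1}^2f_{\ell_j}(\lambda_i^{(\mathrm{up}(j))}-\lambda_i^{(\mathrm{low}(j))})\big]e^{-e^{-(\lambda_1^{(\mathrm{low}(j))}-\lambda_2^{(\mathrm{up}(j))})}}$, and $\mathrm{wt}^{\mathcal P}(\boldsymbol\lambda_1)=\int_{\mathbb R^{N+1}}\mathrm{wt}^{\mathcal{GP}}(\boldsymbol\lambda_1,\boldsymbol\lambda_2)d\boldsymbol\lambda_2$, invariant under adding a constant to all coordinates of $\boldsymbol\lambda_1$. When $u+v>0$, $Z=\int_{\mathbb R^N}\mathrm{wt}^{\mathcal P}(\boldsymbol\lambda_1)d\lambda_1^{(1)}\cdots d\lambda_1^{(N)}$ (with $\lambda_1^{(0)}$ fixed) is finite, positive and independent of $\mathcal P$ and $\lambda_1^{(0)}$, and $\mathrm P^{\mathcal P}_{\mathrm{LG}}(\mathbf L_1)=\mathrm{wt}^{\mathcal P}(\boldsymbol\lambda_1)/Z$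 with $L_1(j)=\lambda_1^{(j)}-\lambda_1^{(0)}$ is a probability density on $\mathbb R^N$. *)

theory Defs
  imports "HOL-Analysis.Analysis" "HOL-Probability.Probability"
begin

definition alpha_ext :: "nat \<Rightarrow> (nat \<Rightarrow> real) \<Rightarrow> nat \<Rightarrow> real" where
  "alpha_ext N \<alpha> j = \<alpha> (if j mod N = 0 then N else j mod N)"

definition strip :: "nat \<Rightarrow> (nat \<times> nat) set" where
  "strip N = {(n, m). m \<le> n \<and> n \<le> m + N}"

definition weight_param :: "nat \<Rightarrow> (nat \<Rightarrow> real) \<Rightarrow> real \<Rightarrow> real \<Rightarrow> nat \<times> nat \<Rightarrow> real" where
  "weight_param N \<alpha> u v x =
     (let n = fst x; m = snd x in
      if n = m then alpha_ext N \<alpha> m + u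
      else if n = m + N then alpha_ext N \<alpha> m + v
      else alpha_ext N \<alpha> n + alpha_ext N \<alpha> m)"

definition inv_gamma_density :: "real \<Rightarrow> real \<Rightarrow> real" where
  "inv_gamma_density \<theta> x = (if x > 0 then x powr (-\<theta> - 1) * exp (- 1 / x) / Gamma \<theta> else 0)"

definition inv_gamma :: "real \<Rightarrow> real measure" where
  "inv_gamma \<theta> = density lborel (\<lambda>x. ennreal (inv_gamma_density \<theta> x))"

definition weight_measure :: "nat \<Rightarrow> (nat \<Rightarrow> real) \<Rightarrow> real \<Rightarrow> real \<Rightarrow> ((nat \<times> nat) \<Rightarrow> real) measure" where
  "weight_measure N \<alpha> u v = PiM (strip N) (\<lambda>x. inv_gamma (weight_param N \<alpha> u v x))"

text \<open>Down-right path p_0,...,p_N (values of p beyond N are irrelevant).\<close>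
definition down_right_path :: "nat \<Rightarrow> (nat \<Rightarrow> nat \<times> nat) \<Rightarrow> bool" where
  "down_right_path N p \<longleftrightarrow> fst (p 0) = snd (p 0) \<and>
     (\<forall>j\<in>{1..N}. p j = (fst (p (j - 1)) + 1, snd (p (j - 1))) \<or>
                   (snd (p (j - 1)) \<ge> 1 \<and> p j = (fst (p (j - 1)), snd (p (j - 1)) - 1)))"

definition horizontal :: "(nat \<Rightarrow> nat \<times> nat) \<Rightarrow> nat \<Rightarrow> bool" where
  "horizontal p j \<longleftrightarrow> fst (p j) = fst (p (j - 1)) + 1"

definition edge_label :: "nat \<Rightarrow> (nat \<Rightarrow> real) \<Rightarrow> (nat \<Rightarrow> nat \<times> nat) \<Rightarrow> nat \<Rightarrow> real" where
  "edge_label N \<alpha> p j = (if horizontal p j then alpha_ext N \<alpha> (fst (p j)) else alpha_ext N \<alpha> (snd (p (j - 1))))"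

definition up_idx :: "(nat \<Rightarrow> nat \<times> nat) \<Rightarrow> nat \<Rightarrow> nat" where
  "up_idx p j = (if horizontal p j then j else j - 1)"

definition low_idx :: "(nat \<Rightarrow> nat \<times> nat) \<Rightarrow> nat \<Rightarrow> nat" where
  "low_idx p j = (if horizontal p j then j - 1 else j)"

definition path_set :: "nat \<Rightarrow> (nat \<Rightarrow> nat \<times> nat) \<Rightarrow> (nat \<times> nat) set" where
  "path_set N p = p ` {..N}"

definition up_right_path :: "nat \<Rightarrow> (nat \<times> nat) list \<Rightarrow> bool" where
  "up_right_path N \<pi> \<longleftrightarrow> \<pi> \<noteq> [] \<and> set \<pi> \<subseteq> strip N \<and>
     (\<forall>i. i + 1 < length \<pi> \<longrightarrow>
        \<pi> ! (i + 1) = (fst (\<pi> ! i) + 1, snd (\<pi> ! i)) \<or> \<pi> ! (i + 1) = (fst (\<pi> ! i), snd (\<pi> ! i) + 1))"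

definition above :: "nat \<Rightarrow> (nat \<Rightarrow> nat \<times> nat) \<Rightarrow> nat \<times> nat \<Rightarrow> bool" where
  "above N p x \<longleftrightarrow> (\<exists>\<pi>. up_right_path N \<pi> \<and> hd \<pi> \<in> path_set N p \<and> last \<pi> = x)"

definition path_above :: "nat \<Rightarrow> (nat \<Rightarrow> nat \<times> nat) \<Rightarrow> (nat \<Rightarrow> nat \<times> nat) \<Rightarrow> bool" where
  "path_above N p q \<longleftrightarrow> (\<forall>j\<le>N. above N p (q j))"

definition polymer_paths :: "nat \<Rightarrow> (nat \<Rightarrow> nat \<times> nat) \<Rightarrow> nat \<times> nat \<Rightarrow> (nat \<times> nat) list set" where
  "polymer_paths N p x = {\<pi>. up_right_path N \<pi> \<and> hd \<pi> \<in> path_set N p \<and> last \<pi> = x \<and>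
       (\<forall>i\<in>{1..<length \<pi>}. \<pi> ! i \<notin> path_set N p)}"

definition z_poly :: "nat \<Rightarrow> (nat \<Rightarrow> nat \<times> nat) \<Rightarrow> (nat \<Rightarrow> real) \<Rightarrow> ((nat \<times> nat) \<Rightarrow> real) \<Rightarrow> nat \<times> nat \<Rightarrow> real" where
  "z_poly N p lam w x = (\<Sum>\<pi>\<in>polymer_paths N p x.
      exp (lam (THE j. j \<le> N \<and> p j = hd \<pi>)) * (\<Prod>i\<in>{1..<length \<pi>}. w (\<pi> ! i)))"

definition free_energy :: "nat \<Rightarrow> (nat \<Rightarrow> nat \<times> nat) \<Rightarrow> (nat \<Rightarrow> real) \<Rightarrow> ((nat \<times> nat) \<Rightarrow> real) \<Rightarrow> nat \<times> nat \<Rightarrow> real" where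
  "free_energy N p lam w x = ln (z_poly N p lam w x)"

definition f_theta :: "real \<Rightarrow> real \<Rightarrow> real" where
  "f_theta \<theta> x = exp (- \<theta> * x - exp (- x))"

definition wt_GP :: "nat \<Rightarrow> (nat \<Rightarrow> real) \<Rightarrow> real \<Rightarrow> real \<Rightarrow> (nat \<Rightarrow> nat \<times> nat) \<Rightarrow>
    (nat \<Rightarrow> real) \<Rightarrow> (nat \<Rightarrow> real) \<Rightarrow> real" where
  "wt_GP N \<alpha> u v p l1 l2 =
     exp (- u * (l1 0 - l2 0) - v * (l1 N - l2 N)) *
     (\<Prod>j\<in>{1..N}.
        f_theta (edge_label N \<alpha> p j) (l1 (up_idx p j) - l1 (low_idx p j)) *
        f_theta (edge_label N \<alpha> p j) (l2 (up_idx p j) - l2 (low_idx p j)) *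
        exp (- exp (- (l1 (low_idx p j) - l2 (up_idx p j)))))"

definition wt_P :: "nat \<Rightarrow> (nat \<Rightarrow> real) \<Rightarrow> real \<Rightarrow> real \<Rightarrow> (nat \<Rightarrow> nat \<times> nat) \<Rightarrow> (nat \<Rightarrow> real) \<Rightarrow> ennreal" where
  "wt_P N \<alpha> u v p l1 = (\<integral>\<^sup>+ l2. ennreal (wt_GP N \<alpha> u v p l1 l2) \<partial>(PiM {..N} (\<lambda>_. lborel)))"

definition init_vec :: "(nat \<Rightarrow> real) \<Rightarrow> nat \<Rightarrow> real" where
  "init_vec L = (\<lambda>j. if j = 0 then 0 else L j)"

definition Z_LG :: "nat \<Rightarrow> (nat \<Rightarrow> real) \<Rightarrow> real \<Rightarrow> real \<Rightarrow> (nat \<Rightarrow> nat \<times> nat) \<Rightarrow> ennreal" where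
  "Z_LG N \<alpha> u v p = (\<integral>\<^sup>+ L. wt_P N \<alpha> u v p (init_vec L) \<partial>(PiM {1..N} (\<lambda>_. lborel)))"

definition P_LG :: "nat \<Rightarrow> (nat \<Rightarrow> real) \<Rightarrow> real \<Rightarrow> real \<Rightarrow> (nat \<Rightarrow> nat \<times> nat) \<Rightarrow> (nat \<Rightarrow> real) \<Rightarrow> ennreal" where
  "P_LG N \<alpha> u v p L = wt_P N \<alpha> u v p (init_vec L) / Z_LG N \<alpha> u v p"

end

theory Submission
  imports Defs
begin

text \<open>
  Part (1) is proved one box at a time, by induction on the area between the two paths.
  Adding the box at a vertex \<open>x\<close> changes a single free energy: it becomes the logarithm of the
  sum of \<open>exp h\<close> over the predecessors of \<open>x\<close>, plus the logarithm of the weight at \<open>x\<close>, which is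
  inverse-gamma and independent of the free energies along the old path. Integrating out this
  logarithm together with the second-layer coordinate at the same position turns the claim into an
  explicit identity between one-dimensional integrals of Gamma and Bessel type: one identity for
  a box in the bulk of the strip and one for a box at either of its two boundaries.

  For part (2), \<open>wt\<^sup>P\<close> is invariant and the free energies are equivariant under adding a
  constant to all coordinates. Testing (1) against \<open>1\<^sub>A(\<lambda> - \<lambda>\<^sub>0) 1\<^sub>[\<^sub>0\<^sub>,\<^sub>1\<^sub>](\<lambda>\<^sub>0)\<close> integrates
  out the base point \<open>\<lambda>\<^sub>0\<close>; this gives the law of the increments and, for \<open>A\<close> the whole space,
  \<open>Z\<^sup>P = Z\<^sup>Q\<close>.
\<close>

section \<open>Gamma-type integrals\<close>

lemma nn_integral_exp_substitution:
  fixes f :: "real \<Rightarrow> real"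
  assumes [measurable]: "f \<in> borel_measurable borel"
  shows "(\<integral>\<^sup>+x. ennreal (f x) * indicator {0<..} x \<partial>lborel) =
         (\<integral>\<^sup>+s. ennreal (f (exp s) * exp s) \<partial>lborel)"
proof -
  let ?M = "density lborel (\<lambda>x. ennreal (f x))"
  let ?M' = "density lborel (\<lambda>s. ennreal (f (exp s) * exp s))"
  have box: "emeasure ?M {exp (- real n)..exp (real n)} = emeasure ?M' {- real n..real n}" for n :: nat
  proof -
    have "(\<integral>\<^sup>+x. ennreal (f x * indicator {exp (- real n)..exp (real n)} x) \<partial>lborel) =
        (\<integral>\<^sup>+s. ennreal (f (exp s) * exp s * indicator {- real n..real n} s) \<partial>lborel)"
      by (intro nn_integral_substitution)
        (auto intro!: DERIV_exp continuous_on_exp continuous_on_id simp: set_borel_measurable_def)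
    then show ?thesis by (simp add: emeasure_density nn_integral_set_ennreal)
  qed
  have "(\<Union>n. {exp (- real n)..exp (real n)}) = {0<..}"
  proof (intro equalityI subsetI)
    fix x :: real assume x: "x \<in> {0<..}"
    obtain n :: nat where "\<bar>ln x\<bar> \<le> real n" using real_arch_simple by blast
    then have "exp (- real n) \<le> exp (ln x)" "exp (ln x) \<le> exp (real n)" by auto
    with x show "x \<in> (\<Union>n. {exp (- real n)..exp (real n)})" by auto
  qed (auto intro: less_le_trans[OF exp_gt_zero])
  then have "emeasure ?M {0<..} = (SUP n. emeasure ?M {exp (- real n)..exp (real n)})"
    by (subst SUP_emeasure_incseq) (auto simp: incseq_def)
  moreover have "(\<Union>n. {- real n..real n}) = (UNIV :: real set)"
  proof (intro equalityI subsetI)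
    fix s :: real
    obtain n :: nat where "\<bar>s\<bar> \<le> real n" using real_arch_simple by blast
    then have "s \<in> {- real n..real n}" by auto
    then show "s \<in> (\<Union>n. {- real n..real n})" by blast
  qed auto
  then have "emeasure ?M' UNIV = (SUP n. emeasure ?M' {- real n..real n})"
    by (subst SUP_emeasure_incseq) (auto simp: incseq_def)
  ultimately show ?thesis
    by (simp add: box emeasure_density)
qed

lemma distr_exp_density_exp:
  "distr (density lborel (\<lambda>s. ennreal (exp s))) borel exp = density lborel (indicator {0<..})"
proof (rule measure_eqI)
  fix A :: "real set" assume "A \<in> sets (distr (density lborel (\<lambda>s. ennreal (exp s))) borel exp)"
  then have [measurable]: "A \<in> sets borel" by simp
  have [measurable]: "exp -` A \<in> sets borel"
    by (rule measurable_sets_borel[OF _ \<open>A \<in> sets borel\<close>]) measurable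
  have "emeasure (distr (density lborel (\<lambda>s. ennreal (exp s))) borel exp) A
      = (\<integral>\<^sup>+s. ennreal (exp s) * indicator (exp -` A) s \<partial>lborel)"
    by (simp add: emeasure_distr emeasure_density)
  also have "\<dots> = (\<integral>\<^sup>+s. ennreal (indicator A (exp s) * exp s) \<partial>lborel)"
    by (intro nn_integral_cong) (auto simp: indicator_def)
  also have "\<dots> = (\<integral>\<^sup>+x. ennreal (indicator A x) * indicator {0<..} x \<partial>lborel)"
    by (simp add: nn_integral_exp_substitution)
  also have "\<dots> = emeasure (density lborel (indicator {0<..})) A"
    by (auto simp: emeasure_density intro!: nn_integral_cong split: split_indicator)
  finally show "emeasure (distr (density lborel (\<lambda>s. ennreal (exp s))) borel exp) A =
      emeasure (density lborel (indicator {0<..})) A" .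
qed simp

lemma nn_integral_exp_substitution_ennreal:
  assumes [measurable]: "H \<in> borel_measurable borel"
  shows "(\<integral>\<^sup>+x. indicator {0<..} x * H x \<partial>lborel) = (\<integral>\<^sup>+s. ennreal (exp s) * H (exp s) \<partial>lborel)"
proof -
  have "(\<integral>\<^sup>+x. indicator {0<..} x * H x \<partial>lborel) = (\<integral>\<^sup>+x. H x \<partial>density lborel (indicator {0<..}))"
    by (simp add: nn_integral_density)
  also have "\<dots> = (\<integral>\<^sup>+s. H (exp s) \<partial>density lborel (\<lambda>s. ennreal (exp s)))"
    by (simp flip: distr_exp_density_exp add: nn_integral_distr)
  also have "\<dots> = (\<integral>\<^sup>+s. ennreal (exp s) * H (exp s) \<partial>lborel)"
    by (simp add: nn_integral_density)
  finally show ?thesis .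
qed

lemma nn_integral_exp_Gamma:
  assumes "\<nu> > 0"
  shows "(\<integral>\<^sup>+s. ennreal (exp (\<nu> * s - exp s)) \<partial>lborel) = ennreal (Gamma \<nu>)"
proof -
  define f where "f t = (if t > 0 then t powr (\<nu> - 1) / exp t else 0)" for t :: real
  have [measurable]: "f \<in> borel_measurable borel" unfolding f_def by measurable
  have "f (exp s) * exp s = exp (\<nu> * s - exp s)" for s
  proof -
    have "f (exp s) * exp s = exp ((\<nu> - 1) * s) / exp (exp s) * exp s"
      by (simp add: f_def powr_def)
    also have "\<dots> = exp ((\<nu> - 1) * s + s - exp s)"
      by (simp add: exp_add exp_diff)
    finally show ?thesis by (simp add: algebra_simps)
  qed
  then have "(\<integral>\<^sup>+s. ennreal (exp (\<nu> * s - exp s)) \<partial>lborel) = (\<integral>\<^sup>+t. ennreal (f t) * indicator {0<..} t \<partial>lborel)"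
    by (simp add: nn_integral_exp_substitution)
  also have "\<dots> = (\<integral>\<^sup>+t. ennreal (indicator {0..} t * t powr (\<nu> - 1) / exp t) \<partial>lborel)"
    by (intro nn_integral_cong) (auto simp: f_def indicator_def)
  also have "\<dots> = ennreal (Gamma \<nu>)"
    using Gamma_conv_nn_integral_real[OF assms] by simp
  finally show ?thesis .
qed

lemma nn_integral_exp_Gamma_scaled:
  assumes \<nu>: "\<nu> > 0" and K: "K > 0"
  shows "(\<integral>\<^sup>+s. ennreal (exp (\<nu> * s - K * exp s)) \<partial>lborel) = ennreal (Gamma \<nu> * K powr (-\<nu>))"
proof -
  have "exp (\<nu> * (- ln K + s) - K * exp (- ln K + s)) = K powr (-\<nu>) * exp (\<nu> * s - exp s)" for s
  proof -
    have "K * exp (- ln K + s) = exp s" "K powr (-\<nu>) = exp (-\<nu> * ln K)"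
      using K by (simp_all add: exp_diff powr_def)
    then show ?thesis by (simp add: exp_add[symmetric] algebra_simps)
  qed
  then have "(\<integral>\<^sup>+s. ennreal (exp (\<nu> * s - K * exp s)) \<partial>lborel) =
      (\<integral>\<^sup>+s. ennreal (K powr (-\<nu>)) * ennreal (exp (\<nu> * s - exp s)) \<partial>lborel)"
    using nn_integral_real_affine[of "\<lambda>s. ennreal (exp (\<nu> * s - K * exp s))" 1 "- ln K"]
    by (simp add: ennreal_mult)
  also have "\<dots> = ennreal (K powr (-\<nu>) * Gamma \<nu>)"
    using Gamma_real_pos[OF \<nu>] by (simp add: nn_integral_cmult nn_integral_exp_Gamma[OF \<nu>] ennreal_mult)
  finally show ?thesis by (simp add: mult.commute)
qed

text \<open>Up to normalisation, this is the modified Bessel function \<open>K\<^sub>\<nu>(2 sqrt (P Q))\<close>.\<close>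
definition bessel_integral :: "real \<Rightarrow> real \<Rightarrow> real \<Rightarrow> ennreal" where
  "bessel_integral \<nu> P Q = (\<integral>\<^sup>+x. ennreal (exp (\<nu> * x - P * exp x - Q * exp (- x))) \<partial>lborel)"

lemma bessel_integral_reflect:
  assumes P: "P > 0" and Q: "Q > 0"
  shows "bessel_integral \<nu> P Q = ennreal ((Q / P) powr \<nu>) * bessel_integral (- \<nu>) P Q"
proof -
  have "exp (\<nu> * (ln (Q / P) + - 1 * x) - P * exp (ln (Q / P) + - 1 * x) - Q * exp (- (ln (Q / P) + - 1 * x)))
      = (Q / P) powr \<nu> * exp (- \<nu> * x - P * exp x - Q * exp (- x))" for x
  proof -
    have "P * exp (ln (Q / P) + - 1 * x) = Q * exp (- x)" "Q * exp (- (ln (Q / P) + - 1 * x)) = P * exp x"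
      "(Q / P) powr \<nu> = exp (\<nu> * ln (Q / P))"
      using P Q by (simp_all add: exp_add exp_minus exp_diff powr_def field_simps)
    then show ?thesis by (simp add: mult_exp_exp algebra_simps)
  qed
  then have "bessel_integral \<nu> P Q =
      (\<integral>\<^sup>+x. ennreal ((Q / P) powr \<nu>) * ennreal (exp (- \<nu> * x - P * exp x - Q * exp (- x))) \<partial>lborel)"
    unfolding bessel_integral_def
    using nn_integral_real_affine[of "\<lambda>x. ennreal (exp (\<nu> * x - P * exp x - Q * exp (- x)))" "- 1" "ln (Q / P)"]
    by (simp add: ennreal_mult)
  then show ?thesis
    by (simp add: nn_integral_cmult bessel_integral_def)
qed

lemma nn_integral_lborel_product:
  fixes X Y :: "real \<Rightarrow> real"
  assumes [measurable]: "X \<in> borel_measurable borel" "Y \<in> borel_measurable borel"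
    and "\<And>x. X x \<ge> 0"
  shows "(\<integral>\<^sup>+x. (\<integral>\<^sup>+y. ennreal (X x * Y y) \<partial>lborel) \<partial>lborel) =
         (\<integral>\<^sup>+x. ennreal (X x) \<partial>lborel) * (\<integral>\<^sup>+y. ennreal (Y y) \<partial>lborel)"
  using assms(3) by (simp add: ennreal_mult' nn_integral_cmult nn_integral_multc)

lemma boundary_box_identity:
  assumes Bc: "B + c > 0"
  shows "(\<integral>\<^sup>+x. (\<integral>\<^sup>+y. ennreal (exp (-c*(x-y)) * (f_theta B (a - x) * f_theta B (b - y) * exp (- exp (- (x - b))))) \<partial>lborel) \<partial>lborel)
          * ennreal (f_theta (B + c) (x' - a) / Gamma (B + c))
       = (\<integral>\<^sup>+y. ennreal (exp (-c*(x'-y)) * (f_theta B (x' - a) * f_theta B (y - b) * exp (- exp (- (a - y))))) \<partial>lborel)"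
proof -
  define P where "P = exp (-a)"
  define Q where "Q = exp b"
  have P: "P > 0" and Q: "Q > 0" unfolding P_def Q_def by auto
  have G: "Gamma (B + c) > 0" using Bc by (rule Gamma_real_pos)
  have sepL: "exp (-c*(x-y)) * (f_theta B (a - x) * f_theta B (b - y) * exp (- exp (- (x - b))))
     = (exp (-B*a) * exp ((B-c)*x - P*exp x - Q * exp (-x))) * (exp (-B*b) * exp ((B+c)*y - exp (-b) * exp y))" for x y
    unfolding P_def Q_def by (simp add: f_theta_def mult_exp_exp algebra_simps)
  have sepR: "exp (-c*(x'-y)) * (f_theta B (x' - a) * f_theta B (y - b) * exp (- exp (- (a - y))))
     = (exp (-c*x') * f_theta B (x' - a) * exp (B * b)) * exp ((c - B)*y - P*exp y - Q * exp (-y))" for y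
    unfolding P_def Q_def by (simp add: f_theta_def mult_exp_exp algebra_simps)
  have "(\<integral>\<^sup>+x. (\<integral>\<^sup>+y. ennreal (exp (-c*(x-y)) * (f_theta B (a - x) * f_theta B (b - y) * exp (- exp (- (x - b))))) \<partial>lborel) \<partial>lborel)
      = ennreal (exp (-B*a)) * bessel_integral (B - c) P Q * (ennreal (exp (-B*b)) * ennreal (Gamma (B + c) * exp (-b) powr (-(B+c))))"
    unfolding sepL
    by (subst nn_integral_lborel_product)
      (auto simp: ennreal_mult nn_integral_cmult bessel_integral_def nn_integral_exp_Gamma_scaled[OF Bc])
  also have "\<dots> = ennreal (exp (-B*a) * exp ((a+b) * (B - c)) * exp (-B*b) * Gamma (B + c) * exp ((B + c) * b))
      * bessel_integral (c - B) P Q"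
  proof -
    have "Q / P = exp (a + b)" unfolding P_def Q_def by (simp add: exp_add exp_minus field_simps)
    then have "(Q / P) powr (B - c) = exp ((a+b) * (B - c))" by (simp add: powr_def mult.commute)
    moreover have "exp (-b) powr (-(B+c)) = exp ((B + c) * b)" by (simp add: powr_def algebra_simps)
    ultimately show ?thesis
      using G by (simp add: bessel_integral_reflect[OF P Q, of "B - c"] ennreal_mult mult_ac)
  qed
  finally have L: "(\<integral>\<^sup>+x. (\<integral>\<^sup>+y. ennreal (exp (-c*(x-y)) * (f_theta B (a - x) * f_theta B (b - y) * exp (- exp (- (x - b))))) \<partial>lborel) \<partial>lborel)
      = ennreal (exp (-B*a) * exp ((a+b) * (B - c)) * exp (-B*b) * Gamma (B + c) * exp ((B + c) * b)) * bessel_integral (c - B) P Q" .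
  have R: "(\<integral>\<^sup>+y. ennreal (exp (-c*(x'-y)) * (f_theta B (x' - a) * f_theta B (y - b) * exp (- exp (- (a - y))))) \<partial>lborel)
     = ennreal (exp (-c*x') * f_theta B (x' - a) * exp (B * b)) * bessel_integral (c - B) P Q"
    unfolding sepR bessel_integral_def by (subst nn_integral_cmult[symmetric]) (auto simp: ennreal_mult f_theta_def)
  have "exp (-B*a) * exp ((a+b) * (B - c)) * exp (-B*b) * Gamma (B + c) * exp ((B + c) * b) * (f_theta (B + c) (x' - a) / Gamma (B + c))
      = exp (-c*x') * f_theta B (x' - a) * exp (B * b)"
    using G by (simp add: f_theta_def mult_exp_exp algebra_simps)
  then show ?thesis
    unfolding L R using G by (simp add: ennreal_mult[symmetric] f_theta_def mult_ac)
qed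

lemma corner_box_identity:
  assumes AB: "A + B > 0"
  shows "(\<integral>\<^sup>+x. (\<integral>\<^sup>+y. ennreal (f_theta A (a - x) * f_theta A (b - y) * exp (- exp (- (x - b))) *
              (f_theta B (c - x) * f_theta B (d - y) * exp (- exp (- (x - d))))) \<partial>lborel) \<partial>lborel)
          * ennreal (f_theta (A + B) (x' - ln (exp a + exp c)) / Gamma (A + B))
       = (\<integral>\<^sup>+y. ennreal (f_theta B (x' - a) * f_theta B (y - b) * exp (- exp (- (a - y))) *
              (f_theta A (x' - c) * f_theta A (y - d) * exp (- exp (- (c - y))))) \<partial>lborel)"
proof -
  define P where "P = exp (-a) + exp (-c)"
  define Q where "Q = exp b + exp d"
  define S where "S = exp (-b) + exp (-d)"
  have P: "P > 0" and Q: "Q > 0" and S: "S > 0" unfolding P_def Q_def S_def by (auto intro: add_pos_pos)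
  have G: "Gamma (A + B) > 0" using AB by (rule Gamma_real_pos)
  have sepL: "f_theta A (a - x) * f_theta A (b - y) * exp (- exp (- (x - b))) *
              (f_theta B (c - x) * f_theta B (d - y) * exp (- exp (- (x - d))))
     = (exp (-A*a - B*c) * exp ((A+B)*x - P*exp x - Q * exp (-x))) * (exp (-A*b - B*d) * exp ((A+B)*y - S * exp y))" for x y
    unfolding P_def Q_def S_def by (simp add: f_theta_def mult_exp_exp algebra_simps)
  have sepR: "f_theta B (x' - a) * f_theta B (y - b) * exp (- exp (- (a - y))) *
              (f_theta A (x' - c) * f_theta A (y - d) * exp (- exp (- (c - y))))
     = (f_theta B (x' - a) * f_theta A (x' - c) * exp (B * b + A * d)) * exp (- (A + B)*y - P*exp y - Q * exp (-y))" for y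
    unfolding P_def Q_def by (simp add: f_theta_def mult_exp_exp algebra_simps)
  have "(\<integral>\<^sup>+x. (\<integral>\<^sup>+y. ennreal (f_theta A (a - x) * f_theta A (b - y) * exp (- exp (- (x - b))) *
              (f_theta B (c - x) * f_theta B (d - y) * exp (- exp (- (x - d))))) \<partial>lborel) \<partial>lborel)
      = ennreal (exp (-A*a - B*c)) * bessel_integral (A + B) P Q * (ennreal (exp (-A*b - B*d)) * ennreal (Gamma (A + B) * S powr (-(A+B))))"
    unfolding sepL
    by (subst nn_integral_lborel_product)
      (auto simp: ennreal_mult nn_integral_cmult bessel_integral_def nn_integral_exp_Gamma_scaled[OF AB S])
  also have "\<dots> = ennreal (exp (-A*a - B*c) * (Q / P) powr (A + B) * exp (-A*b - B*d) * Gamma (A + B) * S powr (-(A+B)))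
      * bessel_integral (- (A + B)) P Q"
    using G by (simp add: bessel_integral_reflect[OF P Q, of "A + B"] ennreal_mult mult_ac)
  finally have L: "(\<integral>\<^sup>+x. (\<integral>\<^sup>+y. ennreal (f_theta A (a - x) * f_theta A (b - y) * exp (- exp (- (x - b))) *
              (f_theta B (c - x) * f_theta B (d - y) * exp (- exp (- (x - d))))) \<partial>lborel) \<partial>lborel)
      = ennreal (exp (-A*a - B*c) * (Q / P) powr (A + B) * exp (-A*b - B*d) * Gamma (A + B) * S powr (-(A+B)))
      * bessel_integral (- (A + B)) P Q" .
  have R: "(\<integral>\<^sup>+y. ennreal (f_theta B (x' - a) * f_theta B (y - b) * exp (- exp (- (a - y))) *
              (f_theta A (x' - c) * f_theta A (y - d) * exp (- exp (- (c - y))))) \<partial>lborel)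
     = ennreal (f_theta B (x' - a) * f_theta A (x' - c) * exp (B * b + A * d)) * bessel_integral (- (A + B)) P Q"
    unfolding sepR bessel_integral_def by (subst nn_integral_cmult[symmetric]) (auto simp: ennreal_mult f_theta_def)
  have "exp (-A*a - B*c) * (Q / P) powr (A + B) * exp (-A*b - B*d) * Gamma (A + B) * S powr (-(A+B))
      * (f_theta (A + B) (x' - ln (exp a + exp c)) / Gamma (A + B))
      = f_theta B (x' - a) * f_theta A (x' - c) * exp (B * b + A * d)"
  proof -
    have "Q = exp (b + d) * S" "exp a + exp c = exp (a + c) * P"
      unfolding P_def Q_def S_def by (simp_all add: exp_add exp_minus field_simps)
    then have "(Q / P) powr (A + B) = exp ((A + B) * (b + d + ln S - ln P))"
      and "ln (exp a + exp c) = a + c + ln P"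
      using P S by (simp_all add: powr_def ln_div ln_mult mult.commute)
    moreover have "S powr (-(A+B)) = exp (- (A + B) * ln S)"
      using S by (simp add: powr_def mult.commute)
    moreover have "exp (- (x' - ln (exp a + exp c))) = exp (a - x') + exp (c - x')"
      by (simp add: exp_diff exp_minus field_simps add_pos_pos)
    ultimately show ?thesis
      using G unfolding f_theta_def by (simp add: mult_exp_exp algebra_simps)
  qed
  then show ?thesis
    unfolding L R using G by (simp add: ennreal_mult[symmetric] f_theta_def mult_ac)
qed

section \<open>Inverse-gamma weights\<close>

lemma nn_integral_inv_gamma_log:
  assumes th: "\<theta> > 0" and [measurable]: "H \<in> borel_measurable borel"
  shows "(\<integral>\<^sup>+x. H x \<partial>inv_gamma \<theta>) = (\<integral>\<^sup>+s. ennreal (f_theta \<theta> s / Gamma \<theta>) * H (exp s) \<partial>lborel)"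
proof -
  have G: "Gamma \<theta> > 0" using th by (rule Gamma_real_pos)
  have dm: "(\<lambda>x. ennreal (inv_gamma_density \<theta> x)) \<in> borel_measurable borel"
    unfolding inv_gamma_density_def by measurable
  have "(\<integral>\<^sup>+x. H x \<partial>inv_gamma \<theta>) = (\<integral>\<^sup>+x. ennreal (inv_gamma_density \<theta> x) * H x \<partial>lborel)"
    unfolding inv_gamma_def using dm by (subst nn_integral_density) auto
  also have "\<dots> = (\<integral>\<^sup>+x. indicator {0<..} x * (ennreal (x powr (-\<theta> - 1) * exp (- 1 / x) / Gamma \<theta>) * H x) \<partial>lborel)"
    by (intro nn_integral_cong) (auto simp: inv_gamma_density_def indicator_def)
  also have "\<dots> = (\<integral>\<^sup>+s. ennreal (exp s) * (ennreal (exp s powr (-\<theta> - 1) * exp (- 1 / exp s) / Gamma \<theta>) * H (exp s)) \<partial>lborel)"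
    by (rule nn_integral_exp_substitution_ennreal) measurable
  also have "\<dots> = (\<integral>\<^sup>+s. ennreal (f_theta \<theta> s / Gamma \<theta>) * H (exp s) \<partial>lborel)"
  proof (intro nn_integral_cong)
    fix s :: real
    have "exp s * (exp s powr (-\<theta> - 1) * exp (- 1 / exp s) / Gamma \<theta>) = f_theta \<theta> s / Gamma \<theta>"
      using G by (simp add: powr_def f_theta_def mult_exp_exp exp_minus field_simps)
    then show "ennreal (exp s) * (ennreal (exp s powr (-\<theta> - 1) * exp (- 1 / exp s) / Gamma \<theta>) * H (exp s)) = ennreal (f_theta \<theta> s / Gamma \<theta>) * H (exp s)"
      using G by (simp add: ennreal_mult[symmetric] mult.assoc[symmetric])
  qed
  finally show ?thesis .
qed

lemma prob_space_inv_gamma: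
  assumes \<theta>: "\<theta> > 0" shows "prob_space (inv_gamma \<theta>)"
proof
  have G: "Gamma \<theta> > 0" using \<theta> by (rule Gamma_real_pos)
  have div: "ennreal (exp (\<theta> * s - exp s) / Gamma \<theta>) = ennreal (exp (\<theta> * s - exp s)) / ennreal (Gamma \<theta>)" for s
    using G by (simp add: divide_ennreal)
  have "emeasure (inv_gamma \<theta>) (space (inv_gamma \<theta>)) = (\<integral>\<^sup>+s. ennreal (f_theta \<theta> s / Gamma \<theta>) \<partial>lborel)"
    using nn_integral_inv_gamma_log[OF \<theta>, of "\<lambda>_. 1"] by simp
  also have "\<dots> = (\<integral>\<^sup>+s. ennreal (exp (\<theta> * s - exp s) / Gamma \<theta>) \<partial>lborel)"
    using nn_integral_real_affine[of "\<lambda>s. ennreal (f_theta \<theta> s / Gamma \<theta>)" "- 1" 0]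
    by (simp add: f_theta_def)
  also have "\<dots> = ennreal (Gamma \<theta>) / ennreal (Gamma \<theta>)"
    unfolding div by (subst nn_integral_divide) (simp_all add: nn_integral_exp_Gamma[OF \<theta>])
  also have "\<dots> = 1"
    using G by (simp add: divide_ennreal)
  finally show "emeasure (inv_gamma \<theta>) (space (inv_gamma \<theta>)) = 1" .
qed

lemma AE_inv_gamma_pos: "AE t in inv_gamma \<theta>. t > 0"
proof -
  have dm: "(\<lambda>x. ennreal (inv_gamma_density \<theta> x)) \<in> borel_measurable borel"
    unfolding inv_gamma_density_def by measurable
  show ?thesis unfolding inv_gamma_def using dm
    by (subst AE_density) (auto simp: inv_gamma_density_def split: if_splits)
qed

lemma sets_inv_gamma[simp]: "sets (inv_gamma \<theta>) = sets borel"
  unfolding inv_gamma_def by simp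

lemma alpha_ext_in_range:
  assumes "N \<ge> 1"
  shows "\<exists>i\<in>{1..N}. alpha_ext N \<alpha> k = \<alpha> i"
proof (cases "k mod N = 0")
  case True then show ?thesis using assms unfolding alpha_ext_def by auto
next
  case False
  have "k mod N < N" using assms by auto
  then show ?thesis using False unfolding alpha_ext_def by (intro bexI[of _ "k mod N"]) auto
qed

lemma weight_param_pos:
  assumes N: "N \<ge> 1"
    and aa: "\<And>i j. i \<in> {1..N} \<Longrightarrow> j \<in> {1..N} \<Longrightarrow> \<alpha> i + \<alpha> j > 0"
    and au: "\<And>i. i \<in> {1..N} \<Longrightarrow> \<alpha> i + u > 0"
    and av: "\<And>i. i \<in> {1..N} \<Longrightarrow> \<alpha> i + v > 0"
  shows "weight_param N \<alpha> u v y > 0"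
  using alpha_ext_in_range[OF N, of \<alpha> "fst y"] alpha_ext_in_range[OF N, of \<alpha> "snd y"] aa au av
  unfolding weight_param_def Let_def by auto

lemma nn_integral_PiM_resample:
  fixes M :: "'i \<Rightarrow> real measure" and H :: "('i \<Rightarrow> real) \<Rightarrow> real \<Rightarrow> ennreal"
  assumes probs: "\<And>i. i \<in> S \<Longrightarrow> prob_space (M i)" and x: "x \<in> S"
    and Hm: "(\<lambda>p. H (fst p) (snd p)) \<in> borel_measurable (PiM S M \<Otimes>\<^sub>M M x)"
    and Hind: "\<And>w t t'. H (w(x := t')) t = H w t"
  shows "(\<integral>\<^sup>+w. H w (w x) \<partial>PiM S M) = (\<integral>\<^sup>+w. (\<integral>\<^sup>+t. H w t \<partial>M x) \<partial>PiM S M)"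
proof -
  define T where "T = S - {x}"
  have ST: "S = insert x T" "x \<notin> T" using x unfolding T_def by auto
  interpret Mx: prob_space "M x" using probs x by auto
  interpret PT: prob_space "PiM T M" using probs ST by (intro prob_space_PiM) auto
  interpret PS: prob_space "PiM S M" using probs by (intro prob_space_PiM) auto
  interpret pair: pair_sigma_finite "M x" "PiM T M" ..
  have D: "distr (M x \<Otimes>\<^sub>M PiM T M) (PiM S M) (\<lambda>(t, X). X(x := t)) = PiM S M"
    using distr_pair_PiM_eq_PiM[of T M x] probs ST by auto
  have Um: "(\<lambda>p. (snd p)(x := fst p)) \<in> measurable (M x \<Otimes>\<^sub>M PiM T M) (PiM S M)"
    using measurable_fun_upd[of S T x snd "M x \<Otimes>\<^sub>M PiM T M" M fst] ST by simp
  have Um': "(\<lambda>(t, X). X(x := t)) \<in> measurable (M x \<Otimes>\<^sub>M PiM T M) (PiM S M)"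
    using Um by (simp add: case_prod_beta')
  have Hc: "(\<lambda>y. H (f y) (g y)) \<in> borel_measurable N"
    if "f \<in> measurable N (PiM S M)" "g \<in> measurable N (M x)" for N f g
    using measurable_compose[OF measurable_Pair[OF that] Hm] by simp
  have H1m: "(\<lambda>w. H w (w x)) \<in> borel_measurable (PiM S M)"
    using x by (intro Hc) auto
  have Qm: "(\<lambda>w. \<integral>\<^sup>+t. H w t \<partial>M x) \<in> borel_measurable (PiM S M)"
    using Hm by (intro Mx.borel_measurable_nn_integral) (simp add: case_prod_beta')
  have "(\<integral>\<^sup>+w. H w (w x) \<partial>PiM S M) = (\<integral>\<^sup>+w. H w (w x) \<partial>distr (M x \<Otimes>\<^sub>M PiM T M) (PiM S M) (\<lambda>(t, X). X(x := t)))"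
    unfolding D ..
  also have "\<dots> = (\<integral>\<^sup>+p. H ((snd p)(x := fst p)) (fst p) \<partial>(M x \<Otimes>\<^sub>M PiM T M))"
    using H1m Um' by (subst nn_integral_distr) (auto simp: case_prod_beta')
  also have "\<dots> = (\<integral>\<^sup>+X. (\<integral>\<^sup>+t. H ((X::'i\<Rightarrow>real)(x := t)) t \<partial>M x) \<partial>PiM T M)"
    using Um by (subst pair.nn_integral_snd[symmetric]) (auto intro!: Hc)
  also have "\<dots> = (\<integral>\<^sup>+X. (\<integral>\<^sup>+t. H X t \<partial>M x) \<partial>PiM T M)"
    by (simp add: Hind)
  finally have L: "(\<integral>\<^sup>+w. H w (w x) \<partial>PiM S M) = (\<integral>\<^sup>+X. (\<integral>\<^sup>+t. H X t \<partial>M x) \<partial>PiM T M)" .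
  have "(\<integral>\<^sup>+w. (\<integral>\<^sup>+t. H w t \<partial>M x) \<partial>PiM S M) = (\<integral>\<^sup>+w. (\<integral>\<^sup>+t. H w t \<partial>M x) \<partial>distr (M x \<Otimes>\<^sub>M PiM T M) (PiM S M) (\<lambda>(t, X). X(x := t)))"
    unfolding D ..
  also have "\<dots> = (\<integral>\<^sup>+p. (\<integral>\<^sup>+t. H ((snd p)(x := fst p)) t \<partial>M x) \<partial>(M x \<Otimes>\<^sub>M PiM T M))"
    using Qm Um' by (subst nn_integral_distr) (auto simp: case_prod_beta')
  also have "\<dots> = (\<integral>\<^sup>+X. (\<integral>\<^sup>+t'. (\<integral>\<^sup>+t. H ((X::'i\<Rightarrow>real)(x := t')) t \<partial>M x) \<partial>M x) \<partial>PiM T M)"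
    using Um Qm by (subst pair.nn_integral_snd[symmetric]) (auto intro!: measurable_compose[OF Um Qm])
  also have "\<dots> = (\<integral>\<^sup>+X. (\<integral>\<^sup>+t. H X t \<partial>M x) \<partial>PiM T M)"
    by (simp add: Hind Mx.emeasure_space_1)
  finally show ?thesis using L by simp
qed

section \<open>Paths and the partition function\<close>

lemma down_right_path_fst:
  assumes "down_right_path N r" "j \<le> N"
  shows "fst (r j) = snd (r j) + j"
  using assms(2)
proof (induction j)
  case 0 then show ?case using assms(1) by (simp add: down_right_path_def)
next
  case (Suc j)
  then have "Suc j \<in> {1..N}" by auto
  with assms(1) have "r (Suc j) = (fst (r j) + 1, snd (r j)) \<or> (snd (r j) \<ge> 1 \<and> r (Suc j) = (fst (r j), snd (r j) - 1))"
    unfolding down_right_path_def by (metis diff_Suc_1)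
  with Suc show ?case by auto
qed

lemma down_right_path_eq_pair:
  assumes "down_right_path N r" "j \<le> N"
  shows "r j = (snd (r j) + j, snd (r j))"
  using down_right_path_fst[OF assms] by (metis prod.collapse)

lemma down_right_path_step:
  assumes "down_right_path N r" "1 \<le> j" "j \<le> N"
  shows "(snd (r j) = snd (r (j-1)) \<and> horizontal r j) \<or> (snd (r j) + 1 = snd (r (j-1)) \<and> \<not> horizontal r j)"
proof -
  have "r j = (fst (r (j-1)) + 1, snd (r (j-1))) \<or> (snd (r (j-1)) \<ge> 1 \<and> r j = (fst (r (j-1)), snd (r (j-1)) - 1))"
    using assms unfolding down_right_path_def by auto
  then show ?thesis unfolding horizontal_def by auto
qed

lemma down_right_path_snd_antimono:
  assumes "down_right_path N r" "i \<le> j" "j \<le> N"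
  shows "snd (r j) \<le> snd (r i)"
  using assms(2,3)
proof (induction j)
  case 0 then show ?case by simp
next
  case (Suc j)
  show ?case
  proof (cases "i = Suc j")
    case True then show ?thesis by simp
  next
    case False
    then have "snd (r j) \<le> snd (r i)" using Suc by auto
    moreover have "snd (r (Suc j)) \<le> snd (r j)" using down_right_path_step[OF assms(1), of "Suc j"] Suc by auto
    ultimately show ?thesis by simp
  qed
qed

lemma down_right_path_fst_mono:
  assumes "down_right_path N r" "i \<le> j" "j \<le> N"
  shows "fst (r i) \<le> fst (r j)"
  using assms(2,3)
proof (induction j)
  case 0 then show ?case by simp
next
  case (Suc j)
  show ?case
  proof (cases "i = Suc j")
    case True then show ?thesis by simp
  next
    case False
    then have "fst (r i) \<le> fst (r j)" using Suc by auto
    moreover have "fst (r j) \<le> fst (r (Suc j))"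
      using down_right_path_step[OF assms(1), of "Suc j"] Suc down_right_path_fst[OF assms(1), of j] down_right_path_fst[OF assms(1), of "Suc j"] by auto
    ultimately show ?thesis by simp
  qed
qed

lemma down_right_path_in_strip:
  assumes "down_right_path N r" "j \<le> N"
  shows "r j \<in> strip N"
  using down_right_path_fst[OF assms] assms(2) unfolding strip_def by (cases "r j") auto

lemma down_right_path_inj:
  assumes "down_right_path N r" "i \<le> N" "j \<le> N" "r i = r j"
  shows "i = j"
proof -
  have "fst (r i) = fst (r j)" "snd (r i) = snd (r j)" using assms(4) by auto
  then show ?thesis using down_right_path_fst[OF assms(1,2)] down_right_path_fst[OF assms(1,3)] by linarith
qed

lemma down_right_path_the_index:
  assumes "down_right_path N r" "i \<le> N"
  shows "(THE j. j \<le> N \<and> r j = r i) = i"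
  using down_right_path_inj[OF assms(1)] assms(2) by (intro the_equality) auto

lemma up_right_path_mono:
  assumes "up_right_path N \<pi>" "i \<le> k" "k < length \<pi>"
  shows "fst (\<pi>!i) \<le> fst (\<pi>!k) \<and> snd (\<pi>!i) \<le> snd (\<pi>!k) \<and>
         fst (\<pi>!k) + snd (\<pi>!k) = fst (\<pi>!i) + snd (\<pi>!i) + (k - i)"
  using assms(2,3)
proof (induction k)
  case 0 then show ?case by simp
next
  case (Suc k)
  show ?case
  proof (cases "i = Suc k")
    case True then show ?thesis by simp
  next
    case False
    then have IH: "fst (\<pi>!i) \<le> fst (\<pi>!k) \<and> snd (\<pi>!i) \<le> snd (\<pi>!k) \<and>
         fst (\<pi>!k) + snd (\<pi>!k) = fst (\<pi>!i) + snd (\<pi>!i) + (k - i)" using Suc by auto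
    have "\<pi> ! (k + 1) = (fst (\<pi>!k) + 1, snd (\<pi>!k)) \<or> \<pi> ! (k + 1) = (fst (\<pi>!k), snd (\<pi>!k) + 1)"
      using assms(1) Suc.prems unfolding up_right_path_def by auto
    then show ?thesis using IH False Suc.prems by auto
  qed
qed

lemma up_right_path_le_last:
  assumes "up_right_path N \<pi>" "i < length \<pi>"
  shows "fst (\<pi>!i) \<le> fst (last \<pi>) \<and> snd (\<pi>!i) \<le> snd (last \<pi>)"
proof -
  have "\<pi> \<noteq> []" using assms(1) unfolding up_right_path_def by auto
  then have "last \<pi> = \<pi> ! (length \<pi> - 1)" by (simp add: last_conv_nth)
  then show ?thesis using up_right_path_mono[OF assms(1), of i "length \<pi> - 1"] assms(2) by auto
qed

lemma up_right_path_length: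
  assumes "up_right_path N \<pi>"
  shows "length \<pi> \<le> fst (last \<pi>) + snd (last \<pi>) + 1"
proof -
  have ne: "\<pi> \<noteq> []" using assms(1) unfolding up_right_path_def by auto
  then have "last \<pi> = \<pi> ! (length \<pi> - 1)" by (simp add: last_conv_nth)
  then show ?thesis using up_right_path_mono[OF assms(1), of 0 "length \<pi> - 1"] ne by auto
qed

lemma finite_polymer_paths: "finite (polymer_paths N p x)"
proof -
  let ?A = "{..fst x} \<times> {..snd x}"
  have "polymer_paths N p x \<subseteq> {xs. set xs \<subseteq> ?A \<and> length xs \<le> fst x + snd x + 1}"
  proof
    fix \<pi> assume "\<pi> \<in> polymer_paths N p x"
    then have u: "up_right_path N \<pi>" and l: "last \<pi> = x" unfolding polymer_paths_def by auto
    have "set \<pi> \<subseteq> ?A"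
    proof
      fix y assume "y \<in> set \<pi>"
      then obtain i where "i < length \<pi>" "y = \<pi> ! i" by (auto simp: in_set_conv_nth)
      then show "y \<in> ?A" using up_right_path_le_last[OF u, of i] l by (auto simp: mem_Times_iff)
    qed
    then show "\<pi> \<in> {xs. set xs \<subseteq> ?A \<and> length xs \<le> fst x + snd x + 1}"
      using up_right_path_length[OF u] l by auto
  qed
  moreover have "finite {xs. set xs \<subseteq> ?A \<and> length xs \<le> fst x + snd x + 1}"
    by (intro finite_lists_length_le) auto
  ultimately show ?thesis by (rule finite_subset)
qed

lemma polymer_paths_on_path:
  assumes P: "down_right_path N p" and i: "i \<le> N"
  shows "polymer_paths N p (p i) = {[p i]}"
proof
  show "{[p i]} \<subseteq> polymer_paths N p (p i)"
    using down_right_path_in_strip[OF P i] i unfolding polymer_paths_def up_right_path_def path_set_def by auto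
next
  show "polymer_paths N p (p i) \<subseteq> {[p i]}"
  proof
    fix \<pi> assume \<pi>: "\<pi> \<in> polymer_paths N p (p i)"
    then have ne: "\<pi> \<noteq> []" and l: "last \<pi> = p i" and h: "hd \<pi> \<in> path_set N p"
      and nin: "\<forall>k\<in>{1..<length \<pi>}. \<pi> ! k \<notin> path_set N p"
      unfolding polymer_paths_def up_right_path_def by auto
    have "length \<pi> = 1"
    proof (rule ccontr)
      assume n1: "length \<pi> \<noteq> 1"
      have "length \<pi> > 0" using ne by simp
      with n1 have "length \<pi> \<ge> 2" by linarith
      then have "length \<pi> - 1 \<in> {1..<length \<pi>}" by auto
      moreover have "\<pi> ! (length \<pi> - 1) = p i" using l ne by (simp add: last_conv_nth)
      ultimately show False using nin i unfolding path_set_def by auto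
    qed
    then have "\<pi> = [last \<pi>]" using ne by (cases \<pi>) auto
    then show "\<pi> \<in> {[p i]}" using l by simp
  qed
qed

lemma z_poly_on_path:
  assumes P: "down_right_path N p" and i: "i \<le> N"
  shows "z_poly N p lam w (p i) = exp (lam i)"
  unfolding z_poly_def polymer_paths_on_path[OF assms] using down_right_path_the_index[OF assms] by simp

definition predecessors :: "nat \<Rightarrow> nat \<times> nat \<Rightarrow> (nat \<times> nat) set" where
  "predecessors N x = {y \<in> strip N. (fst x \<ge> 1 \<and> y = (fst x - 1, snd x)) \<or> (snd x \<ge> 1 \<and> y = (fst x, snd x - 1))}"

lemma finite_predecessors: "finite (predecessors N x)"
proof -
  have "predecessors N x \<subseteq> {(fst x - 1, snd x), (fst x, snd x - 1)}" unfolding predecessors_def by auto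
  then show ?thesis by (rule finite_subset) auto
qed

lemma up_right_path_snoc:
  assumes "\<pi> \<noteq> []"
  shows "up_right_path N (\<pi> @ [x]) \<longleftrightarrow> up_right_path N \<pi> \<and> x \<in> strip N \<and>
    (x = (fst (last \<pi>) + 1, snd (last \<pi>)) \<or> x = (fst (last \<pi>), snd (last \<pi>) + 1))"
proof -
  define step where "step a b \<longleftrightarrow> b = (fst a + 1, snd a) \<or> b = (fst a, snd a + 1)" for a b :: "nat \<times> nat"
  have urp: "up_right_path N \<rho> \<longleftrightarrow> \<rho> \<noteq> [] \<and> set \<rho> \<subseteq> strip N \<and>
      (\<forall>i. i + 1 < length \<rho> \<longrightarrow> step (\<rho> ! i) (\<rho> ! (i + 1)))" for \<rho>
    unfolding up_right_path_def step_def ..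
  have last: "\<pi> ! (length \<pi> - 1) = last \<pi>" "(\<pi> @ [x]) ! (length \<pi> - 1) = last \<pi>"
    using assms by (simp_all add: last_conv_nth nth_append)
  have "(\<forall>i. i + 1 < length (\<pi> @ [x]) \<longrightarrow> step ((\<pi> @ [x]) ! i) ((\<pi> @ [x]) ! (i + 1))) \<longleftrightarrow>
      (\<forall>i. i + 1 < length \<pi> \<longrightarrow> step (\<pi> ! i) (\<pi> ! (i + 1))) \<and> step (last \<pi>) x"
  proof (intro iffI conjI allI impI)
    fix i assume H: "\<forall>i. i + 1 < length (\<pi> @ [x]) \<longrightarrow> step ((\<pi> @ [x]) ! i) ((\<pi> @ [x]) ! (i + 1))"
      and i: "i + 1 < length \<pi>"
    then show "step (\<pi> ! i) (\<pi> ! (i + 1))" using H[rule_format, of i] by (simp add: nth_append)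
  next
    assume H: "\<forall>i. i + 1 < length (\<pi> @ [x]) \<longrightarrow> step ((\<pi> @ [x]) ! i) ((\<pi> @ [x]) ! (i + 1))"
    have "length \<pi> - 1 + 1 = length \<pi>" using assms by simp
    then show "step (last \<pi>) x" using H[rule_format, of "length \<pi> - 1"] last by simp
  next
    fix i assume H: "(\<forall>i. i + 1 < length \<pi> \<longrightarrow> step (\<pi> ! i) (\<pi> ! (i + 1))) \<and> step (last \<pi>) x"
      and i: "i + 1 < length (\<pi> @ [x])"
    show "step ((\<pi> @ [x]) ! i) ((\<pi> @ [x]) ! (i + 1))"
    proof (cases "i + 1 < length \<pi>")
      case True then show ?thesis using H by (simp add: nth_append)
    next
      case False
      then have "i = length \<pi> - 1" "i + 1 = length \<pi>" using i by auto
      then show ?thesis using H last by simp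
    qed
  qed
  then show ?thesis
    using assms unfolding urp step_def by auto
qed

lemma polymer_paths_snoc_iff:
  assumes "\<pi> \<noteq> []" and x: "x \<in> strip N" "x \<notin> path_set N p"
  shows "\<pi> @ [x] \<in> polymer_paths N p x \<longleftrightarrow> last \<pi> \<in> predecessors N x \<and> \<pi> \<in> polymer_paths N p (last \<pi>)"
proof -
  have later: "(\<forall>i\<in>{1..<length (\<pi> @ [x])}. (\<pi> @ [x]) ! i \<notin> path_set N p) \<longleftrightarrow>
      (\<forall>i\<in>{1..<length \<pi>}. \<pi> ! i \<notin> path_set N p)"
    using x(2) by (auto simp: nth_append less_Suc_eq)
  have step: "(x = (fst (last \<pi>) + 1, snd (last \<pi>)) \<or> x = (fst (last \<pi>), snd (last \<pi>) + 1)) \<longleftrightarrow>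
      (fst x \<ge> 1 \<and> last \<pi> = (fst x - 1, snd x)) \<or> (snd x \<ge> 1 \<and> last \<pi> = (fst x, snd x - 1))"
    by (cases x; cases "last \<pi>") auto
  have "up_right_path N \<pi> \<Longrightarrow> last \<pi> \<in> strip N"
    using assms(1) unfolding up_right_path_def by auto
  then have "up_right_path N (\<pi> @ [x]) \<longleftrightarrow> up_right_path N \<pi> \<and> last \<pi> \<in> predecessors N x"
    unfolding up_right_path_snoc[OF assms(1)] predecessors_def step using x(1) by blast
  then show ?thesis
    using assms(1) unfolding polymer_paths_def mem_Collect_eq later by auto
qed

lemma polymer_paths_snoc:
  assumes x: "x \<in> strip N" "x \<notin> path_set N p"
  shows "polymer_paths N p x = (\<lambda>\<pi>. \<pi> @ [x]) ` (\<Union>y\<in>predecessors N x. polymer_paths N p y)"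
proof (intro equalityI subsetI)
  fix \<pi>' assume \<pi>': "\<pi>' \<in> polymer_paths N p x"
  then have "\<pi>' \<noteq> []" "last \<pi>' = x" "hd \<pi>' \<noteq> x"
    using x(2) unfolding polymer_paths_def up_right_path_def by auto
  then obtain \<pi> where \<pi>: "\<pi> \<noteq> []" "\<pi>' = \<pi> @ [x]"
    by (metis append_butlast_last_id butlast.simps(2) last_ConsL list.sel(1) neq_Nil_conv)
  with \<pi>' show "\<pi>' \<in> (\<lambda>\<pi>. \<pi> @ [x]) ` (\<Union>y\<in>predecessors N x. polymer_paths N p y)"
    using polymer_paths_snoc_iff[OF \<pi>(1) x] by blast
next
  fix \<pi>' assume "\<pi>' \<in> (\<lambda>\<pi>. \<pi> @ [x]) ` (\<Union>y\<in>predecessors N x. polymer_paths N p y)"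
  then obtain y \<pi> where "y \<in> predecessors N x" "\<pi> \<in> polymer_paths N p y" "\<pi>' = \<pi> @ [x]" by blast
  moreover from this have "\<pi> \<noteq> []" "last \<pi> = y" unfolding polymer_paths_def up_right_path_def by auto
  ultimately show "\<pi>' \<in> polymer_paths N p x"
    using polymer_paths_snoc_iff[of \<pi> x N p] x by simp
qed

lemma polymer_paths_nonempty: "\<pi> \<in> polymer_paths N p y \<Longrightarrow> \<pi> \<noteq> []"
  unfolding polymer_paths_def up_right_path_def by auto

lemma z_poly_recursion:
  assumes x: "x \<in> strip N" "x \<notin> path_set N p"
  shows "z_poly N p lam w x = (\<Sum>y\<in>predecessors N x. z_poly N p lam w y) * w x"
proof -
  define tm where "tm \<pi> = exp (lam (THE j. j \<le> N \<and> p j = hd \<pi>)) * (\<Prod>i\<in>{1..<length \<pi>}. w (\<pi> ! i))" for \<pi>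
  have zdef: "z_poly N p lam w y = (\<Sum>\<pi>\<in>polymer_paths N p y. tm \<pi>)" for y
    unfolding z_poly_def tm_def ..
  let ?U = "\<Union>y\<in>predecessors N x. polymer_paths N p y"
  have inj: "inj_on (\<lambda>\<pi>. \<pi> @ [x]) ?U" by (intro inj_onI) simp
  have tm_app: "tm (\<pi> @ [x]) = tm \<pi> * w x" if "\<pi> \<in> ?U" for \<pi>
  proof -
    have ne: "\<pi> \<noteq> []" using that polymer_paths_nonempty by blast
    then have l1: "length \<pi> \<ge> 1" by (cases \<pi>) auto
    have "(\<Prod>i\<in>{1..<length (\<pi> @ [x])}. w ((\<pi> @ [x]) ! i)) = (\<Prod>i\<in>{1..<Suc (length \<pi>)}. w ((\<pi> @ [x]) ! i))"
      by simp
    also have "\<dots> = (\<Prod>i\<in>{1..<length \<pi>}. w ((\<pi> @ [x]) ! i)) * w ((\<pi> @ [x]) ! length \<pi>)"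
      using l1 by (subst prod.op_ivl_Suc) auto
    also have "\<dots> = (\<Prod>i\<in>{1..<length \<pi>}. w (\<pi> ! i)) * w x"
      by (auto intro!: prod.cong simp: nth_append)
    finally show ?thesis unfolding tm_def using ne by (simp add: mult.assoc)
  qed
  have "z_poly N p lam w x = (\<Sum>\<pi>'\<in>(\<lambda>\<pi>. \<pi> @ [x]) ` ?U. tm \<pi>')"
    unfolding zdef polymer_paths_snoc[OF x] ..
  also have "\<dots> = (\<Sum>\<pi>\<in>?U. tm (\<pi> @ [x]))"
    by (rule sum.reindex[OF inj, unfolded comp_def])
  also have "\<dots> = (\<Sum>\<pi>\<in>?U. tm \<pi> * w x)"
    by (intro sum.cong refl tm_app)
  also have "\<dots> = (\<Sum>y\<in>predecessors N x. (\<Sum>\<pi>\<in>polymer_paths N p y. tm \<pi> * w x))"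
  proof (rule sum.UNION_disjoint)
    show "finite (predecessors N x)" by (rule finite_predecessors)
    show "\<forall>y\<in>predecessors N x. finite (polymer_paths N p y)" by (simp add: finite_polymer_paths)
    show "\<forall>y\<in>predecessors N x. \<forall>y'\<in>predecessors N x. y \<noteq> y' \<longrightarrow> polymer_paths N p y \<inter> polymer_paths N p y' = {}"
      unfolding polymer_paths_def by auto
  qed
  also have "\<dots> = (\<Sum>y\<in>predecessors N x. z_poly N p lam w y) * w x"
    unfolding zdef sum_distrib_right ..
  finally show ?thesis .
qed

lemma z_poly_cong_below:
  assumes "\<And>v. fst v \<le> fst x \<Longrightarrow> snd v \<le> snd x \<Longrightarrow> w v = w' v"
  shows "z_poly N p lam w x = z_poly N p lam w' x"
  unfolding z_poly_def
proof (intro sum.cong refl arg_cong2[where f="(*)"] prod.cong)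
  fix \<pi> i assume \<pi>: "\<pi> \<in> polymer_paths N p x" and i: "i \<in> {1..<length \<pi>}"
  then have "up_right_path N \<pi>" "last \<pi> = x" unfolding polymer_paths_def by auto
  then show "w (\<pi> ! i) = w' (\<pi> ! i)" using up_right_path_le_last[of N \<pi> i] i assms by auto
qed

lemma z_poly_nonneg:
  assumes "\<And>v. v \<in> strip N \<Longrightarrow> w v > 0"
  shows "z_poly N p lam w x \<ge> 0"
  unfolding z_poly_def
proof (intro sum_nonneg mult_nonneg_nonneg prod_nonneg)
  fix \<pi> i assume \<pi>: "\<pi> \<in> polymer_paths N p x" and i: "i \<in> {1..<length \<pi>}"
  then have "set \<pi> \<subseteq> strip N" unfolding polymer_paths_def up_right_path_def by auto
  then have "\<pi> ! i \<in> strip N" using i by auto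
  then show "0 \<le> w (\<pi> ! i)" using assms by (simp add: less_imp_le)
qed auto

definition diag_above :: "nat \<Rightarrow> (nat \<Rightarrow> nat \<times> nat) \<Rightarrow> nat \<times> nat \<Rightarrow> bool" where
  "diag_above N p x \<longleftrightarrow> x \<in> strip N \<and> snd (p (fst x - snd x)) \<le> snd x"

lemma down_right_path_snd_prev:
  assumes "down_right_path N r" "1 \<le> j" "j \<le> N"
  shows "snd (r (j - 1)) \<le> snd (r j) + 1"
  using down_right_path_step[OF assms] by auto

lemma above_imp_diag_above:
  assumes P: "down_right_path N p" and a: "above N p x"
  shows "diag_above N p x"
proof -
  obtain \<pi> where u: "up_right_path N \<pi>" and h: "hd \<pi> \<in> path_set N p" and l: "last \<pi> = x"
    using a unfolding above_def by auto
  have ne: "\<pi> \<noteq> []" and st: "set \<pi> \<subseteq> strip N" using u unfolding up_right_path_def by auto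
  have "diag_above N p (\<pi> ! k)" if "k < length \<pi>" for k
    using that
  proof (induction k)
    case 0
    obtain i where i: "i \<le> N" "hd \<pi> = p i" using h unfolding path_set_def by auto
    have "\<pi> ! 0 = p i" using i ne by (simp add: hd_conv_nth)
    then show ?case using down_right_path_fst[OF P i(1)] down_right_path_in_strip[OF P i(1)] unfolding diag_above_def by simp
  next
    case (Suc k)
    then have IH: "diag_above N p (\<pi> ! k)" by auto
    have sk: "\<pi> ! Suc k \<in> strip N" using Suc.prems st by auto
    have sk0: "\<pi> ! k \<in> strip N" using Suc.prems st by auto
    have "\<pi> ! (k + 1) = (fst (\<pi>!k) + 1, snd (\<pi>!k)) \<or> \<pi> ! (k + 1) = (fst (\<pi>!k), snd (\<pi>!k) + 1)"
      using u Suc.prems unfolding up_right_path_def by auto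
    then show ?case
    proof
      assume R: "\<pi> ! (k + 1) = (fst (\<pi>!k) + 1, snd (\<pi>!k))"
      let ?d = "fst (\<pi>!k) - snd (\<pi>!k)"
      have d: "?d + 1 \<le> N" "fst (\<pi>!k) \<ge> snd (\<pi>!k)" using sk sk0 R unfolding strip_def by auto
      have "snd (p (?d + 1)) \<le> snd (p ?d)" using down_right_path_snd_antimono[OF P, of ?d "?d+1"] d by auto
      then show ?thesis using IH sk R d unfolding diag_above_def by (auto simp: Suc_diff_le)
    next
      assume U: "\<pi> ! (k + 1) = (fst (\<pi>!k), snd (\<pi>!k) + 1)"
      let ?d = "fst (\<pi>!k) - snd (\<pi>!k)"
      have d: "1 \<le> ?d" "?d \<le> N" using sk sk0 U unfolding strip_def by auto
      have "snd (p (?d - 1)) \<le> snd (p ?d) + 1" using down_right_path_snd_prev[OF P d] .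
      moreover have "fst (\<pi> ! Suc k) - snd (\<pi> ! Suc k) = ?d - 1" using U by simp
      ultimately show ?thesis using IH sk U unfolding diag_above_def by auto
    qed
  qed
  moreover have "x = \<pi> ! (length \<pi> - 1)" using l ne by (simp add: last_conv_nth)
  ultimately show ?thesis using ne by simp
qed

lemma path_above_snd_le:
  assumes P: "down_right_path N p" and Q: "down_right_path N q" and QP: "path_above N p q" and j: "j \<le> N"
  shows "snd (p j) \<le> snd (q j)"
proof -
  have "diag_above N p (q j)" using above_imp_diag_above[OF P] QP j unfolding path_above_def by auto
  then show ?thesis unfolding diag_above_def using down_right_path_fst[OF Q j] by simp
qed

lemma diag_above_on_path:
  assumes P: "down_right_path N p" and a: "diag_above N p x" and e: "snd x = snd (p (fst x - snd x))"
  shows "x = p (fst x - snd x)"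
proof -
  have "x \<in> strip N" using a unfolding diag_above_def by auto
  then have d: "fst x - snd x \<le> N" "snd x \<le> fst x" unfolding strip_def by auto
  show ?thesis using down_right_path_eq_pair[OF P d(1)] e d(2) by (metis add.commute le_add_diff_inverse prod.collapse)
qed

lemma diag_above_not_on_path:
  assumes P: "down_right_path N p" and a: "diag_above N p x" and e: "snd x \<noteq> snd (p (fst x - snd x))"
  shows "x \<notin> path_set N p"
proof
  assume "x \<in> path_set N p"
  then obtain i where i: "i \<le> N" "x = p i" unfolding path_set_def by auto
  then have "fst x - snd x = i" using down_right_path_fst[OF P i(1)] by simp
  then show False using e i by simp
qed

lemma diag_above_predecessor:
  assumes N: "N \<ge> 1" and P: "down_right_path N p" and x: "diag_above N p x"
    and lt: "snd (p (fst x - snd x)) < snd x"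
  obtains y where "y \<in> predecessors N x" "diag_above N p y" "fst y + snd y < fst x + snd x"
proof -
  define d where "d = fst x - snd x"
  have xs: "x \<in> strip N" using x unfolding diag_above_def by auto
  have dN: "d \<le> N" "snd x \<le> fst x" using xs unfolding strip_def d_def by auto
  show ?thesis
  proof (cases "d < N")
    case True
    let ?y = "(fst x, snd x - 1)"
    have m1: "snd x \<ge> 1" using lt by simp
    have ys: "?y \<in> strip N" using xs True m1 unfolding strip_def d_def by auto
    have dy: "fst ?y - snd ?y = d + 1" using m1 dN unfolding d_def by auto
    have "snd (p (d + 1)) \<le> snd (p d)" using down_right_path_snd_antimono[OF P, of d "d+1"] True by auto
    then have "diag_above N p ?y" using ys dy lt unfolding diag_above_def d_def by auto
    moreover have "?y \<in> predecessors N x" using ys m1 unfolding predecessors_def by auto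
    ultimately show ?thesis using that m1 by auto
  next
    case False
    then have dEq: "d = N" using dN by simp
    let ?y = "(fst x - 1, snd x)"
    have n1: "fst x \<ge> 1" using dEq N dN unfolding d_def by auto
    have ys: "?y \<in> strip N" using xs dEq N dN unfolding strip_def d_def by auto
    have dy: "fst ?y - snd ?y = N - 1" using dEq dN N unfolding d_def by auto
    have "snd (p (N - 1)) \<le> snd (p N) + 1" using down_right_path_snd_prev[OF P N order_refl] .
    then have "diag_above N p ?y" using ys dy lt dEq unfolding diag_above_def d_def by auto
    moreover have "?y \<in> predecessors N x" using ys n1 unfolding predecessors_def by auto
    ultimately show ?thesis using that n1 by auto
  qed
qed

lemma z_poly_pos:
  assumes N: "N \<ge> 1" and P: "down_right_path N p" and wpos: "\<And>v. v \<in> strip N \<Longrightarrow> w v > 0"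
    and "diag_above N p x"
  shows "z_poly N p lam w x > 0"
  using assms(4)
proof (induction "fst x + snd x" arbitrary: x rule: less_induct)
  case less
  define d where "d = fst x - snd x"
  have xs: "x \<in> strip N" and le: "snd (p d) \<le> snd x" using less.prems unfolding diag_above_def d_def by auto
  show ?case
  proof (cases "snd x = snd (p d)")
    case True
    then have "x = p d" using diag_above_on_path[OF P less.prems] unfolding d_def by simp
    moreover have "d \<le> N" using xs unfolding strip_def d_def by auto
    ultimately show ?thesis using z_poly_on_path[OF P] by simp
  next
    case False
    then have nx: "x \<notin> path_set N p" using diag_above_not_on_path[OF P less.prems] unfolding d_def by simp
    have "snd (p (fst x - snd x)) < snd x" using False le unfolding d_def by simp
    then obtain y where y: "y \<in> predecessors N x" "diag_above N p y" "fst y + snd y < fst x + snd x"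
      by (rule diag_above_predecessor[OF N P less.prems])
    have "z_poly N p lam w y > 0" using less.hyps[OF y(3) y(2)] .
    then have "(\<Sum>y\<in>predecessors N x. z_poly N p lam w y) > 0"
      using y(1) z_poly_nonneg[of N w p lam, OF wpos] finite_predecessors by (intro sum_pos2) auto
    moreover have "w x > 0" using wpos xs by auto
    ultimately show ?thesis unfolding z_poly_recursion[OF xs nx] by simp
  qed
qed

lemma down_right_path_lower_corner:
  assumes R: "down_right_path N r" and d: "d \<le> N" and m: "snd (r d) \<ge> 1"
    and right: "d < N \<Longrightarrow> r (d + 1) = (fst (r d), snd (r d) - 1)"
    and left: "0 < d \<Longrightarrow> r (d - 1) = (fst (r d) - 1, snd (r d))"
  shows "down_right_path N (r(d := (fst (r d) - 1, snd (r d) - 1)))"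
proof -
  define r0 where "r0 = r(d := (fst (r d) - 1, snd (r d) - 1))"
  have fd: "fst (r d) = snd (r d) + d" using down_right_path_fst[OF R d] .
  show ?thesis
    unfolding down_right_path_def r0_def[symmetric]
  proof (intro conjI ballI)
    show "fst (r0 0) = snd (r0 0)"
      using R fd unfolding r0_def down_right_path_def by (cases "d = 0") auto
    fix j assume j: "j \<in> {1..N}"
    consider "j = d" | "j = d + 1" | "j \<noteq> d" "j \<noteq> d + 1" by blast
    then show "r0 j = (fst (r0 (j - 1)) + 1, snd (r0 (j - 1))) \<or>
        (snd (r0 (j - 1)) \<ge> 1 \<and> r0 j = (fst (r0 (j - 1)), snd (r0 (j - 1)) - 1))"
    proof cases
      case 1
      then show ?thesis using left j m fd unfolding r0_def by auto
    next
      case 2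
      then show ?thesis using right j m fd unfolding r0_def by auto
    next
      case 3
      then have "r0 j = r j" "r0 (j - 1) = r (j - 1)" using j unfolding r0_def by auto
      then show ?thesis using R j unfolding down_right_path_def by simp
    qed
  qed
qed

text \<open>Among the indices where \<open>r\<close> lies strictly above \<open>p\<close>, one maximising \<open>2 snd (r j) + j\<close> is an
  outer corner of \<open>r\<close>: both neighbours lie on the same level or one below.\<close>
lemma outer_corner_exists:
  assumes P: "down_right_path N p" and R: "down_right_path N r"
    and ne: "\<exists>j\<le>N. snd (p j) < snd (r j)"
  obtains d where "d \<le> N" "snd (p d) < snd (r d)"
    "d < N \<Longrightarrow> r (d + 1) = (fst (r d), snd (r d) - 1)"
    "0 < d \<Longrightarrow> r (d - 1) = (fst (r d) - 1, snd (r d))"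
proof -
  define D where "D = {j. j \<le> N \<and> snd (p j) < snd (r j)}"
  define val where "val j = 2 * snd (r j) + j" for j
  have fD: "finite D" and neD: "D \<noteq> {}" using ne unfolding D_def by auto
  then have "Max (val ` D) \<in> val ` D" by (intro Max_in) auto
  then obtain d where dD: "d \<in> D" and dM: "val d = Max (val ` D)" by auto
  have maxd: "val j \<le> val d" if "j \<in> D" for j
    using Max_ge[of "val ` D" "val j"] fD that dM by auto
  have dN: "d \<le> N" and lt: "snd (p d) < snd (r d)" using dD unfolding D_def by auto
  have "r (d + 1) = (fst (r d), snd (r d) - 1)" if dlt: "d < N"
  proof -
    have step: "(snd (r (d+1)) = snd (r d) \<and> horizontal r (d+1)) \<or> (snd (r (d+1)) + 1 = snd (r d) \<and> \<not> horizontal r (d+1))"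
      using down_right_path_step[OF R, of "d + 1"] that by simp
    have "snd (p (d+1)) \<le> snd (p d)" using down_right_path_snd_antimono[OF P, of d "d+1"] that by simp
    then have "snd (r (d+1)) \<noteq> snd (r d)"
      using maxd[of "d + 1"] lt that unfolding D_def val_def by auto
    then have below: "snd (r (d+1)) + 1 = snd (r d)" using step by auto
    have "d + 1 \<le> N" using dlt by simp
    then obtain s where "r (d+1) = (s + (d+1), s)"
      using down_right_path_eq_pair[OF R] by blast
    with below show ?thesis using down_right_path_fst[OF R dN] by simp
  qed
  moreover have "r (d - 1) = (fst (r d) - 1, snd (r d))" if d0: "0 < d"
  proof -
    have step: "(snd (r d) = snd (r (d-1)) \<and> horizontal r d) \<or> (snd (r d) + 1 = snd (r (d-1)) \<and> \<not> horizontal r d)"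
      using down_right_path_step[OF R _ dN] d0 by simp
    have pd: "snd (p (d-1)) \<le> snd (p d) + 1" using down_right_path_snd_prev[OF P _ dN] d0 by simp
    have "snd (r (d-1)) \<noteq> snd (r d) + 1"
    proof
      assume eq: "snd (r (d-1)) = snd (r d) + 1"
      then have "d - 1 \<in> D" using pd lt dN unfolding D_def by auto
      then show False using maxd[of "d - 1"] eq d0 unfolding val_def by simp
    qed
    then have level: "snd (r (d-1)) = snd (r d)" using step by auto
    have "d - 1 \<le> N" using dN by simp
    then obtain s where "r (d-1) = (s + (d-1), s)"
      using down_right_path_eq_pair[OF R] by blast
    with level show ?thesis using down_right_path_fst[OF R dN] d0 by simp
  qed
  ultimately show ?thesis using that dN lt by blast
qed

section \<open>Products of Lebesgue measures\<close>

abbreviation lborel_upto :: "nat \<Rightarrow> (nat \<Rightarrow> real) measure" where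
  "lborel_upto N \<equiv> PiM {..N} (\<lambda>_. lborel)"

abbreviation lborel_1to :: "nat \<Rightarrow> (nat \<Rightarrow> real) measure" where
  "lborel_1to N \<equiv> PiM {1..N} (\<lambda>_. lborel)"

lemma sigma_finite_PiM_lborel:
  assumes "finite K" shows "sigma_finite_measure (PiM K (\<lambda>_. lborel :: real measure))"
proof -
  interpret finite_product_sigma_finite "\<lambda>_. lborel :: real measure" K
    using assms by unfold_locales
  show ?thesis by (rule sigma_finite_measure_axioms)
qed

lemma product_sigma_finite_lborel: "product_sigma_finite (\<lambda>_. lborel :: real measure)"
  by unfold_locales

lemma measurable_coordinate: "(\<lambda>l. l k) \<in> borel_measurable (lborel_upto N)"
proof (cases "k \<le> N")
  case False
  then have "\<forall>l\<in>space (lborel_upto N). l k = undefined"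
    by (auto simp: space_PiM PiE_def extensional_def)
  then show ?thesis
    by (subst measurable_cong[where g = "\<lambda>_. undefined"]) auto
qed simp

lemma measurable_upd_lborel_upto:
  assumes "j \<le> N" "f \<in> measurable M (lborel_upto N)" "g \<in> borel_measurable M"
  shows "(\<lambda>x. (f x)(j := g x)) \<in> measurable M (lborel_upto N)"
  using assms by (intro measurable_fun_upd[where J = "{..N}"]) auto

lemma nn_integral_lborel_upto_split:
  assumes j: "j \<le> N" and f: "f \<in> borel_measurable (lborel_upto N)"
  shows "(\<integral>\<^sup>+x. f x \<partial>lborel_upto N) = (\<integral>\<^sup>+x. (\<integral>\<^sup>+y. f (x(j := y)) \<partial>lborel) \<partial>PiM ({..N} - {j}) (\<lambda>_. lborel))"
proof -
  interpret product_sigma_finite "\<lambda>_. lborel :: real measure" by (rule product_sigma_finite_lborel)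
  have "{..N} = insert j ({..N} - {j})" using j by auto
  then show ?thesis using product_nn_integral_insert[of "{..N} - {j}" j f] f by simp
qed

lemma measurable_upd_split:
  assumes "j \<le> N" "f \<in> measurable M (PiM ({..N} - {j}) (\<lambda>_. lborel))" "g \<in> borel_measurable M"
  shows "(\<lambda>x. (f x)(j := g x)) \<in> measurable M (lborel_upto N)"
  using assms by (intro measurable_fun_upd[where J = "{..N} - {j}"]) auto

text \<open>Resampling coordinate \<open>j\<close> as \<open>Lf l + g\<close>, with \<open>g\<close> of density \<open>\<rho>\<close> independent of \<open>l\<close>,
  turns the density \<open>\<kappa>\<close> into \<open>\<kappa>'\<close> whenever \<open>\<kappa>'\<close> is the \<open>j\<close>-marginal of \<open>\<kappa>\<close> times \<open>\<rho> (x - Lf l)\<close>.\<close>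
lemma nn_integral_resample_coordinate:
  assumes j: "j \<le> N"
    and [measurable]: "\<kappa> \<in> borel_measurable (lborel_upto N)" "\<kappa>' \<in> borel_measurable (lborel_upto N)"
      "\<rho> \<in> borel_measurable borel" "Lf \<in> borel_measurable (lborel_upto N)" "F \<in> borel_measurable (lborel_upto N)"
    and Lj: "\<And>l x. Lf (l(j:=x)) = Lf l"
    and marginal: "\<And>l x'. l \<in> space (lborel_upto N) \<Longrightarrow>
      \<kappa>' (l(j:=x')) = (\<integral>\<^sup>+x. \<kappa> (l(j:=x)) \<partial>lborel) * ennreal (\<rho> (x' - Lf l))"
  shows "(\<integral>\<^sup>+l. \<kappa> l * (\<integral>\<^sup>+g. ennreal (\<rho> g) * F (l(j := Lf l + g)) \<partial>lborel) \<partial>lborel_upto N)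
       = (\<integral>\<^sup>+l. F l * \<kappa>' l \<partial>lborel_upto N)"
proof -
  let ?PI = "PiM ({..N} - {j}) (\<lambda>_. lborel :: real measure)"
  note measurable_upd_split[OF j, measurable] measurable_upd_lborel_upto[OF j, measurable]
  define \<Phi> where "\<Phi> l = (\<integral>\<^sup>+g. ennreal (\<rho> g) * F (l(j := Lf l + g)) \<partial>lborel)" for l
  have space_upd: "l(j:=x) \<in> space (lborel_upto N)" if "l \<in> space ?PI" for l x
    using that j by (auto simp: space_PiM PiE_iff extensional_def)
  have \<Phi>_upd: "\<Phi> (l(j:=x)) = \<Phi> l" for l x
    unfolding \<Phi>_def Lj by simp
  have \<Phi>_shift: "\<Phi> l = (\<integral>\<^sup>+x. ennreal (\<rho> (x - Lf l)) * F (l(j := x)) \<partial>lborel)" if l: "l \<in> space ?PI" for l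
  proof -
    have [measurable]: "(\<lambda>x. F (l(j := x))) \<in> borel_measurable borel" using l by measurable
    show ?thesis unfolding \<Phi>_def
      using nn_integral_real_affine[of "\<lambda>x. ennreal (\<rho> (x - Lf l)) * F (l(j := x))" 1 "Lf l"] by simp
  qed
  have [measurable]: "\<Phi> \<in> borel_measurable (lborel_upto N)" unfolding \<Phi>_def by measurable
  have "(\<integral>\<^sup>+l. \<kappa> l * \<Phi> l \<partial>lborel_upto N) = (\<integral>\<^sup>+l. (\<integral>\<^sup>+x. \<kappa> (l(j:=x)) * \<Phi> (l(j:=x)) \<partial>lborel) \<partial>?PI)"
    by (rule nn_integral_lborel_upto_split[OF j]) measurable
  also have "\<dots> = (\<integral>\<^sup>+l. (\<integral>\<^sup>+x. \<kappa> (l(j:=x)) \<partial>lborel) * \<Phi> l \<partial>?PI)"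
    unfolding \<Phi>_upd by (intro nn_integral_cong nn_integral_multc) measurable
  also have "\<dots> = (\<integral>\<^sup>+l. (\<integral>\<^sup>+x. F (l(j:=x)) * \<kappa>' (l(j:=x)) \<partial>lborel) \<partial>?PI)"
  proof (intro nn_integral_cong)
    fix l assume l: "l \<in> space ?PI"
    have "(\<integral>\<^sup>+x. F (l(j:=x)) * \<kappa>' (l(j:=x)) \<partial>lborel)
        = (\<integral>\<^sup>+x. (\<integral>\<^sup>+x. \<kappa> (l(j:=x)) \<partial>lborel) * (ennreal (\<rho> (x - Lf l)) * F (l(j:=x))) \<partial>lborel)"
      using marginal[OF space_upd[OF l]] by (intro nn_integral_cong) (simp add: Lj mult_ac)
    also have "\<dots> = (\<integral>\<^sup>+x. \<kappa> (l(j:=x)) \<partial>lborel) * \<Phi> l"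
      using l by (simp add: \<Phi>_shift nn_integral_cmult)
    finally show "(\<integral>\<^sup>+x. \<kappa> (l(j:=x)) \<partial>lborel) * \<Phi> l = (\<integral>\<^sup>+x. F (l(j:=x)) * \<kappa>' (l(j:=x)) \<partial>lborel)" ..
  qed
  also have "\<dots> = (\<integral>\<^sup>+l. F l * \<kappa>' l \<partial>lborel_upto N)"
    by (rule nn_integral_lborel_upto_split[OF j, symmetric]) measurable
  finally show ?thesis unfolding \<Phi>_def .
qed

lemma nn_integral_marginal_coordinate:
  fixes W W' :: "(nat \<Rightarrow> real) \<Rightarrow> (nat \<Rightarrow> real) \<Rightarrow> real"
  assumes j: "j \<le> N"
    and Wm: "(\<lambda>q. W (fst q) (snd q)) \<in> borel_measurable (lborel_upto N \<Otimes>\<^sub>M lborel_upto N)"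
    and W'm: "(\<lambda>q. W' (fst q) (snd q)) \<in> borel_measurable (lborel_upto N \<Otimes>\<^sub>M lborel_upto N)"
    and l: "l \<in> space (lborel_upto N)"
    and box: "\<And>m. (\<integral>\<^sup>+x. (\<integral>\<^sup>+y. ennreal (W (l(j:=x)) (m(j:=y))) \<partial>lborel) \<partial>lborel) * c
                 = (\<integral>\<^sup>+y. ennreal (W' (l(j:=x')) (m(j:=y))) \<partial>lborel)"
  shows "(\<integral>\<^sup>+m. ennreal (W' (l(j:=x')) m) \<partial>lborel_upto N)
       = (\<integral>\<^sup>+x. (\<integral>\<^sup>+m. ennreal (W (l(j:=x)) m) \<partial>lborel_upto N) \<partial>lborel) * c"
proof -
  let ?PI = "PiM ({..N} - {j}) (\<lambda>_. lborel :: real measure)"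
  interpret PI: pair_sigma_finite lborel ?PI
    by (intro pair_sigma_finite.intro lborel.sigma_finite_measure_axioms sigma_finite_PiM_lborel) auto
  note measurable_upd_split[OF j, measurable] measurable_upd_lborel_upto[OF j, measurable]
  have [measurable]: "(\<lambda>x. W (f x) (g x)) \<in> borel_measurable M" "(\<lambda>x. W' (f x) (g x)) \<in> borel_measurable M"
    if "f \<in> measurable M (lborel_upto N)" "g \<in> measurable M (lborel_upto N)" for M f g
    using measurable_compose[OF measurable_Pair[OF that] Wm] measurable_compose[OF measurable_Pair[OF that] W'm] by simp_all
  have "(\<integral>\<^sup>+m. ennreal (W' (l(j:=x')) m) \<partial>lborel_upto N)
      = (\<integral>\<^sup>+m. (\<integral>\<^sup>+x. (\<integral>\<^sup>+y. ennreal (W (l(j:=x)) (m(j:=y))) \<partial>lborel) \<partial>lborel) * c \<partial>?PI)"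
    using l by (subst nn_integral_lborel_upto_split[OF j]) (auto simp: box)
  also have "\<dots> = (\<integral>\<^sup>+m. (\<integral>\<^sup>+x. (\<integral>\<^sup>+y. ennreal (W (l(j:=x)) (m(j:=y))) \<partial>lborel) \<partial>lborel) \<partial>?PI) * c"
    using l by (intro nn_integral_multc) measurable
  also have "(\<integral>\<^sup>+m. (\<integral>\<^sup>+x. (\<integral>\<^sup>+y. ennreal (W (l(j:=x)) (m(j:=y))) \<partial>lborel) \<partial>lborel) \<partial>?PI)
      = (\<integral>\<^sup>+x. (\<integral>\<^sup>+m. ennreal (W (l(j:=x)) m) \<partial>lborel_upto N) \<partial>lborel)"
    using l by (subst PI.Fubini') (measurable, auto intro!: nn_integral_cong simp: nn_integral_lborel_upto_split[OF j])
  finally show ?thesis .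
qed

lemma nn_integral_PiM_lborel_shift:
  fixes I :: "nat set"
  assumes fin: "finite I"
  shows "g \<in> borel_measurable (PiM I (\<lambda>_. lborel :: real measure)) \<Longrightarrow>
    (\<integral>\<^sup>+x. g (restrict (\<lambda>j. x j + c) I) \<partial>PiM I (\<lambda>_. lborel)) = (\<integral>\<^sup>+x. g x \<partial>PiM I (\<lambda>_. lborel))"
  using fin
proof (induction I arbitrary: g rule: finite_induct)
  case empty
  interpret P: product_sigma_finite "\<lambda>_. lborel :: real measure" by (rule product_sigma_finite_lborel)
  show ?case
  proof (intro nn_integral_cong)
    fix x :: "nat \<Rightarrow> real" assume "x \<in> space (PiM {} (\<lambda>_. lborel :: real measure))"
    then have "x = (\<lambda>k. undefined)" by (simp add: space_PiM)
    moreover have "restrict (\<lambda>j. x j + c) ({}::nat set) = (\<lambda>k. undefined)" by auto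
    ultimately show "g (restrict (\<lambda>j. x j + c) ({}::nat set)) = g x" by simp
  qed
next
  case (insert i I)
  interpret P: product_sigma_finite "\<lambda>_. lborel :: real measure" by (rule product_sigma_finite_lborel)
  interpret SI: sigma_finite_measure "PiM I (\<lambda>_. lborel :: real measure)" using insert by (intro sigma_finite_PiM_lborel) auto
  note gm[measurable] = insert.prems
  have sh: "(\<lambda>x. restrict (\<lambda>j. x j + c) (insert i I)) \<in> measurable (PiM (insert i I) (\<lambda>_. lborel)) (PiM (insert i I) (\<lambda>_. lborel))"
    by measurable
  define K where "K X = (\<integral>\<^sup>+y. g (X(i := y)) \<partial>lborel)" for X
  have upd: "(\<lambda>p. (fst p)(i := snd p)) \<in> measurable (PiM I (\<lambda>_. lborel) \<Otimes>\<^sub>M lborel) (PiM (insert i I) (\<lambda>_. lborel :: real measure))"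
    by (rule measurable_fun_upd[where J = I]) auto
  have Km: "K \<in> borel_measurable (PiM I (\<lambda>_. lborel))"
    unfolding K_def using measurable_compose[OF upd gm]
    by (intro lborel.borel_measurable_nn_integral) (simp add: case_prod_beta')
  have "(\<integral>\<^sup>+x. g (restrict (\<lambda>j. x j + c) (insert i I)) \<partial>PiM (insert i I) (\<lambda>_. lborel))
      = (\<integral>\<^sup>+x. (\<integral>\<^sup>+y. g (restrict (\<lambda>j. (x(i := y)) j + c) (insert i I)) \<partial>lborel) \<partial>PiM I (\<lambda>_. lborel))"
    using insert.hyps by (subst P.product_nn_integral_insert) (auto intro: measurable_compose[OF sh gm])
  also have "\<dots> = (\<integral>\<^sup>+x. K (restrict (\<lambda>j. x j + c) I) \<partial>PiM I (\<lambda>_. lborel))"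
  proof (intro nn_integral_cong)
    fix x assume x: "x \<in> space (PiM I (\<lambda>_. lborel :: real measure))"
    let ?X = "restrict (\<lambda>j. x j + c) I"
    have X: "?X \<in> space (PiM I (\<lambda>_. lborel :: real measure))" by (simp add: space_PiM)
    have eq: "restrict (\<lambda>j. (x(i := y)) j + c) (insert i I) = ?X(i := y + c)" for y
      using insert.hyps by (auto simp: fun_eq_iff)
    have hm: "(\<lambda>y. g (?X(i := y))) \<in> borel_measurable borel"
      using measurable_comp[OF measurable_component_update[OF X insert.hyps(2)] gm] by (simp add: comp_def)
    have "(\<integral>\<^sup>+y. g (?X(i := y + c)) \<partial>lborel) = (\<integral>\<^sup>+y. g (?X(i := y)) \<partial>lborel)"
      using nn_integral_real_affine[OF hm, of 1 c] by (simp add: add.commute)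
    then show "(\<integral>\<^sup>+y. g (restrict (\<lambda>j. (x(i := y)) j + c) (insert i I)) \<partial>lborel) = K ?X"
      unfolding K_def eq .
  qed
  also have "\<dots> = (\<integral>\<^sup>+x. K x \<partial>PiM I (\<lambda>_. lborel))" by (rule insert.IH[OF Km])
  also have "\<dots> = (\<integral>\<^sup>+x. g x \<partial>PiM (insert i I) (\<lambda>_. lborel))"
    unfolding K_def using insert.hyps by (subst P.product_nn_integral_insert) auto
  finally show ?case .
qed

section \<open>The two-layer weight\<close>

lemma measurable_wt_GP [measurable]:
  "(\<lambda>q. wt_GP N \<alpha> u v r (fst q) (snd q)) \<in> borel_measurable (lborel_upto N \<Otimes>\<^sub>M lborel_upto N)"
proof -
  note measurable_coordinate[of _ N, measurable]
  show ?thesis unfolding wt_GP_def f_theta_def by measurable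
qed

lemma measurable_wt_P: "wt_P N \<alpha> u v p \<in> borel_measurable (lborel_upto N)"
proof -
  interpret sigma_finite_measure "lborel_upto N" by (intro sigma_finite_PiM_lborel) auto
  show ?thesis unfolding wt_P_def
    using measurable_wt_GP[of N \<alpha> u v p] by (intro borel_measurable_nn_integral) (simp add: case_prod_beta')
qed

lemma alpha_ext_period: "alpha_ext N \<alpha> (k + N) = alpha_ext N \<alpha> k"
  unfolding alpha_ext_def by simp

definition wt_GP_factor :: "nat \<Rightarrow> (nat \<Rightarrow> real) \<Rightarrow> (nat \<Rightarrow> nat \<times> nat) \<Rightarrow> nat \<Rightarrow> (nat \<Rightarrow> real) \<Rightarrow> (nat \<Rightarrow> real) \<Rightarrow> real" where
  "wt_GP_factor N \<alpha> r k l1 l2 = f_theta (edge_label N \<alpha> r k) (l1 (up_idx r k) - l1 (low_idx r k)) *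
        f_theta (edge_label N \<alpha> r k) (l2 (up_idx r k) - l2 (low_idx r k)) *
        exp (- exp (- (l1 (low_idx r k) - l2 (up_idx r k))))"

lemma wt_GP_eq_factors: "wt_GP N \<alpha> u v r l m = exp (- u * (l 0 - m 0) - v * (l N - m N)) * (\<Prod>k\<in>{1..N}. wt_GP_factor N \<alpha> r k l m)"
  unfolding wt_GP_def wt_GP_factor_def ..

lemma wt_GP_factor_nonneg: "wt_GP_factor N \<alpha> r k l m \<ge> 0"
  unfolding wt_GP_factor_def f_theta_def by simp

lemma wt_GP_factor_upd:
  assumes "k \<noteq> d" "k \<noteq> d + 1"
  shows "wt_GP_factor N \<alpha> r k (l(d:=s)) (m(d:=y)) = wt_GP_factor N \<alpha> r k l m"
proof -
  have "up_idx r k \<noteq> d" "low_idx r k \<noteq> d" using assms unfolding up_idx_def low_idx_def by auto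
  then show ?thesis unfolding wt_GP_factor_def by simp
qed

lemma wt_GP_factor_cong:
  assumes "r k = r0 k" "r (k - 1) = r0 (k - 1)"
  shows "wt_GP_factor N \<alpha> r k = wt_GP_factor N \<alpha> r0 k"
  using assms unfolding wt_GP_factor_def edge_label_def up_idx_def low_idx_def horizontal_def by simp

lemma wt_GP_factor_upd_path:
  assumes "r = r0(d := z)" "k \<noteq> d" "k \<noteq> d + 1"
  shows "wt_GP_factor N \<alpha> r k (l(d:=s)) (m(d:=y)) = wt_GP_factor N \<alpha> r0 k l m"
proof -
  have "k - 1 \<noteq> d" using assms(2,3) by (cases k) auto
  then have "wt_GP_factor N \<alpha> r k = wt_GP_factor N \<alpha> r0 k"
    using assms(1,2) by (intro wt_GP_factor_cong) auto
  then show ?thesis using wt_GP_factor_upd[OF assms(2,3)] by simp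
qed

lemma box_identity_lift:
  fixes W W' :: "(nat \<Rightarrow> real) \<Rightarrow> (nat \<Rightarrow> real) \<Rightarrow> real"
  assumes W: "\<And>s y. W (l(d:=s)) (m(d:=y)) = C * loc s y"
    and W': "\<And>x' y. W' (l(d:=x')) (m(d:=y)) = C * loc' x' y"
    and C: "C \<ge> 0"
    and locm: "(\<lambda>q. loc (fst q) (snd q)) \<in> borel_measurable (lborel \<Otimes>\<^sub>M lborel)"
    and loc'm: "\<And>x'. loc' x' \<in> borel_measurable borel"
    and locnn: "\<And>s y. loc s y \<ge> 0"
    and id: "(\<integral>\<^sup>+s. (\<integral>\<^sup>+y. ennreal (loc s y) \<partial>lborel) \<partial>lborel) * R = (\<integral>\<^sup>+y. ennreal (loc' x' y) \<partial>lborel)"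
  shows "(\<integral>\<^sup>+s. (\<integral>\<^sup>+y. ennreal (W (l(d:=s)) (m(d:=y))) \<partial>lborel) \<partial>lborel) * R
       = (\<integral>\<^sup>+y. ennreal (W' (l(d:=x')) (m(d:=y))) \<partial>lborel)"
proof -
  have m1: "(\<lambda>y. ennreal (loc s y)) \<in> borel_measurable borel" for s
    using measurable_Pair2[OF locm, of s] by simp
  have m2: "(\<lambda>s. \<integral>\<^sup>+y. ennreal (loc s y) \<partial>lborel) \<in> borel_measurable borel"
    using lborel.borel_measurable_nn_integral[of "\<lambda>s y. ennreal (loc s y)" lborel] locm
    by (simp add: case_prod_beta')
  have "(\<integral>\<^sup>+s. (\<integral>\<^sup>+y. ennreal (W (l(d:=s)) (m(d:=y))) \<partial>lborel) \<partial>lborel)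
      = (\<integral>\<^sup>+s. ennreal C * (\<integral>\<^sup>+y. ennreal (loc s y) \<partial>lborel) \<partial>lborel)"
    unfolding W using C m1 by (intro nn_integral_cong) (simp add: ennreal_mult' nn_integral_cmult)
  also have "\<dots> = ennreal C * (\<integral>\<^sup>+s. (\<integral>\<^sup>+y. ennreal (loc s y) \<partial>lborel) \<partial>lborel)"
    by (rule nn_integral_cmult) (use m2 in simp)
  finally have L: "(\<integral>\<^sup>+s. (\<integral>\<^sup>+y. ennreal (W (l(d:=s)) (m(d:=y))) \<partial>lborel) \<partial>lborel)
      = ennreal C * (\<integral>\<^sup>+s. (\<integral>\<^sup>+y. ennreal (loc s y) \<partial>lborel) \<partial>lborel)" .
  have R: "(\<integral>\<^sup>+y. ennreal (W' (l(d:=x')) (m(d:=y))) \<partial>lborel) = ennreal C * (\<integral>\<^sup>+y. ennreal (loc' x' y) \<partial>lborel)"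
    unfolding W' using C loc'm[of x'] by (simp add: ennreal_mult' nn_integral_cmult)
  show ?thesis unfolding L R id[symmetric] by (simp add: mult.assoc)
qed

lemma prod_split_off:
  assumes "finite A" "a \<in> A"
  shows "prod g A = prod g (A - {a}) * g a"
  using prod.remove[OF assms, of g] by (simp only: mult.commute)

lemma prod_split_off_pair:
  assumes "finite A" "a \<in> A" "b \<in> A" "a \<noteq> b"
  shows "prod g A = prod g (A - {a, b}) * (g a * g b)"
proof -
  have "prod g A = prod g (A - {a}) * g a" by (rule prod_split_off[OF assms(1,2)])
  also have "prod g (A - {a}) = prod g (A - {a} - {b}) * g b" using assms by (intro prod_split_off) auto
  also have "A - {a} - {b} = A - {a, b}" by blast
  finally show ?thesis by (simp only: mult.assoc mult.commute[of "g b"])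
qed

lemma wt_GP_corner_flip:
  assumes R0: "down_right_path N r0"
    and d: "0 < d" "d < N"
    and c1: "r0 (d - 1) = (fst (r0 d), snd (r0 d) + 1)"
    and c2: "r0 (d + 1) = (fst (r0 d) + 1, snd (r0 d))"
    and r: "r = r0(d := (fst (r0 d) + 1, snd (r0 d) + 1))"
    and pos: "weight_param N \<alpha> u v (r d) > 0"
  shows "(\<integral>\<^sup>+s. (\<integral>\<^sup>+y. ennreal (wt_GP N \<alpha> u v r0 (l(d:=s)) (m(d:=y))) \<partial>lborel) \<partial>lborel)
                 * ennreal (f_theta (weight_param N \<alpha> u v (r d)) (x' - ln (exp (l (d - 1)) + exp (l (d + 1)))) / Gamma (weight_param N \<alpha> u v (r d)))
               = (\<integral>\<^sup>+y. ennreal (wt_GP N \<alpha> u v r (l(d:=x')) (m(d:=y))) \<partial>lborel)"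
proof -
  define A where "A = alpha_ext N \<alpha> (snd (r0 (d - 1)))"
  define B where "B = alpha_ext N \<alpha> (fst (r0 (d + 1)))"
  have fd: "fst (r0 d) = snd (r0 d) + d" using down_right_path_fst[OF R0] d by auto
  have dm1: "d - 1 \<noteq> d" "d + 1 \<noteq> d" "Suc (d - 1) = d" "d - 1 \<noteq> d + 1" using d by auto
  have h0d: "\<not> horizontal r0 d" unfolding horizontal_def using c1 by simp
  have h0d1: "horizontal r0 (d + 1)" unfolding horizontal_def using c2 by simp
  have hd: "horizontal r d" unfolding horizontal_def using c1 r dm1 by simp
  have hd1: "\<not> horizontal r (d + 1)" unfolding horizontal_def using c2 r dm1 by simp
  have e0d: "edge_label N \<alpha> r0 d = A" unfolding edge_label_def A_def using h0d by simp
  have e0d1: "edge_label N \<alpha> r0 (d + 1) = B" unfolding edge_label_def B_def using h0d1 by simp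
  have ed: "edge_label N \<alpha> r d = B" unfolding edge_label_def B_def using hd r c2 by simp
  have ed1: "edge_label N \<alpha> r (d + 1) = A" unfolding edge_label_def A_def using hd1 r c1 dm1 by simp
  have th: "weight_param N \<alpha> u v (r d) = A + B"
  proof -
    have "fst (r d) = snd (r d) + d" using r fd by simp
    then have "fst (r d) \<noteq> snd (r d)" "fst (r d) \<noteq> snd (r d) + N" using d by auto
    moreover have "alpha_ext N \<alpha> (fst (r d)) = B" unfolding B_def using r c2 by simp
    moreover have "alpha_ext N \<alpha> (snd (r d)) = A" unfolding A_def using r c1 by simp
    ultimately show ?thesis unfolding weight_param_def Let_def by simp
  qed
  define C where "C = exp (- u * (l 0 - m 0) - v * (l N - m N)) * (\<Prod>k\<in>{1..N} - {d, d+1}. wt_GP_factor N \<alpha> r0 k l m)"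
  have din: "d \<in> {1..N}" "d + 1 \<in> {1..N}" "d \<noteq> d + 1" using d by auto
  have C0: "C \<ge> 0" unfolding C_def by (intro mult_nonneg_nonneg prod_nonneg wt_GP_factor_nonneg) auto
  define loc where "loc s y = (f_theta A (l (d - 1) - s) * f_theta A (m (d - 1) - y) * exp (- exp (- (s - m (d - 1))))) *
      (f_theta B (l (d + 1) - s) * f_theta B (m (d + 1) - y) * exp (- exp (- (s - m (d + 1)))))" for s y
  define loc' where "loc' x' y = (f_theta B (x' - l (d - 1)) * f_theta B (y - m (d - 1)) * exp (- exp (- (l (d - 1) - y)))) *
      (f_theta A (x' - l (d + 1)) * f_theta A (y - m (d + 1)) * exp (- exp (- (l (d + 1) - y))))" for x' y
  have W: "wt_GP N \<alpha> u v r0 (l(d:=s)) (m(d:=y)) = C * loc s y" for s y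
  proof -
    have "wt_GP N \<alpha> u v r0 (l(d:=s)) (m(d:=y)) = exp (- u * (l 0 - m 0) - v * (l N - m N)) *
        ((\<Prod>k\<in>{1..N} - {d, d+1}. wt_GP_factor N \<alpha> r0 k (l(d:=s)) (m(d:=y))) * (wt_GP_factor N \<alpha> r0 d (l(d:=s)) (m(d:=y)) * wt_GP_factor N \<alpha> r0 (d + 1) (l(d:=s)) (m(d:=y))))"
      unfolding wt_GP_eq_factors prod_split_off_pair[OF finite_atLeastAtMost din] using d by simp
    also have "(\<Prod>k\<in>{1..N} - {d, d+1}. wt_GP_factor N \<alpha> r0 k (l(d:=s)) (m(d:=y))) = (\<Prod>k\<in>{1..N} - {d, d+1}. wt_GP_factor N \<alpha> r0 k l m)"
      by (intro prod.cong refl wt_GP_factor_upd) auto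
    also have "wt_GP_factor N \<alpha> r0 d (l(d:=s)) (m(d:=y)) * wt_GP_factor N \<alpha> r0 (d + 1) (l(d:=s)) (m(d:=y)) = loc s y"
      unfolding wt_GP_factor_def loc_def e0d e0d1 using h0d h0d1 dm1 unfolding up_idx_def low_idx_def by simp
    finally show ?thesis unfolding C_def by (simp only: mult.assoc)
  qed
  have W': "wt_GP N \<alpha> u v r (l(d:=x')) (m(d:=y)) = C * loc' x' y" for x' y
  proof -
    have "wt_GP N \<alpha> u v r (l(d:=x')) (m(d:=y)) = exp (- u * (l 0 - m 0) - v * (l N - m N)) *
        ((\<Prod>k\<in>{1..N} - {d, d+1}. wt_GP_factor N \<alpha> r k (l(d:=x')) (m(d:=y))) * (wt_GP_factor N \<alpha> r d (l(d:=x')) (m(d:=y)) * wt_GP_factor N \<alpha> r (d + 1) (l(d:=x')) (m(d:=y))))"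
      unfolding wt_GP_eq_factors prod_split_off_pair[OF finite_atLeastAtMost din] using d by simp
    also have "(\<Prod>k\<in>{1..N} - {d, d+1}. wt_GP_factor N \<alpha> r k (l(d:=x')) (m(d:=y))) = (\<Prod>k\<in>{1..N} - {d, d+1}. wt_GP_factor N \<alpha> r0 k l m)"
      using r by (intro prod.cong refl wt_GP_factor_upd_path) auto
    also have "wt_GP_factor N \<alpha> r d (l(d:=x')) (m(d:=y)) * wt_GP_factor N \<alpha> r (d + 1) (l(d:=x')) (m(d:=y)) = loc' x' y"
      unfolding wt_GP_factor_def loc'_def ed ed1 using hd hd1 dm1 unfolding up_idx_def low_idx_def by simp
    finally show ?thesis unfolding C_def by (simp only: mult.assoc)
  qed
  have locm: "(\<lambda>q. loc (fst q) (snd q)) \<in> borel_measurable (lborel \<Otimes>\<^sub>M lborel)"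
    unfolding loc_def f_theta_def by measurable
  have loc'm: "loc' x' \<in> borel_measurable borel" for x'
    unfolding loc'_def f_theta_def by measurable
  have locnn: "loc s y \<ge> 0" for s y unfolding loc_def f_theta_def by simp
  have id: "(\<integral>\<^sup>+s. (\<integral>\<^sup>+y. ennreal (loc s y) \<partial>lborel) \<partial>lborel)
      * ennreal (f_theta (A + B) (x' - ln (exp (l (d - 1)) + exp (l (d + 1)))) / Gamma (A + B))
      = (\<integral>\<^sup>+y. ennreal (loc' x' y) \<partial>lborel)"
    unfolding loc_def loc'_def by (rule corner_box_identity) (use pos th in simp)
  show ?thesis unfolding th
    by (rule box_identity_lift[where W="wt_GP N \<alpha> u v r0" and W'="wt_GP N \<alpha> u v r" and l=l and m=m and d=d and C=C and loc=loc and loc'=loc', OF W W' C0 locm loc'm locnn id])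
qed

lemma wt_GP_left_flip:
  assumes R0: "down_right_path N r0" and N: "N \<ge> 1"
    and c2: "r0 1 = (fst (r0 0) + 1, snd (r0 0))"
    and r: "r = r0(0 := (fst (r0 0) + 1, snd (r0 0) + 1))"
    and pos: "weight_param N \<alpha> u v (r 0) > 0"
  shows "(\<integral>\<^sup>+s. (\<integral>\<^sup>+y. ennreal (wt_GP N \<alpha> u v r0 (l(0:=s)) (m(0:=y))) \<partial>lborel) \<partial>lborel)
                 * ennreal (f_theta (weight_param N \<alpha> u v (r 0)) (x' - l 1) / Gamma (weight_param N \<alpha> u v (r 0)))
               = (\<integral>\<^sup>+y. ennreal (wt_GP N \<alpha> u v r (l(0:=x')) (m(0:=y))) \<partial>lborel)"
proof -
  define B where "B = alpha_ext N \<alpha> (fst (r0 1))"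
  have f0: "fst (r0 0) = snd (r0 0)" using down_right_path_fst[OF R0, of 0] by simp
  have h01: "horizontal r0 1" unfolding horizontal_def using c2 by simp
  have h1: "\<not> horizontal r 1" unfolding horizontal_def using c2 r by simp
  have e01: "edge_label N \<alpha> r0 1 = B" unfolding edge_label_def B_def using h01 by simp
  have e1: "edge_label N \<alpha> r 1 = B" unfolding edge_label_def B_def using h1 r c2 f0 by simp
  have th: "weight_param N \<alpha> u v (r 0) = B + u"
    unfolding weight_param_def Let_def B_def using r c2 f0 by simp
  have N0: "N \<noteq> 0" using N by simp
  define C where "C = exp (- v * (l N - m N)) * (\<Prod>k\<in>{1..N} - {1}. wt_GP_factor N \<alpha> r0 k l m)"
  have din: "1 \<in> {1..N}" using N by auto
  have C0: "C \<ge> 0" unfolding C_def by (intro mult_nonneg_nonneg prod_nonneg wt_GP_factor_nonneg) auto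
  define loc where "loc s y = exp (- u * (s - y)) * (f_theta B (l 1 - s) * f_theta B (m 1 - y) * exp (- exp (- (s - m 1))))" for s y
  define loc' where "loc' x' y = exp (- u * (x' - y)) * (f_theta B (x' - l 1) * f_theta B (y - m 1) * exp (- exp (- (l 1 - y))))" for x' y
  have W: "wt_GP N \<alpha> u v r0 (l(0:=s)) (m(0:=y)) = C * loc s y" for s y
  proof -
    have "wt_GP N \<alpha> u v r0 (l(0:=s)) (m(0:=y)) = (exp (- u * (s - y)) * exp (- v * (l N - m N))) *
        ((\<Prod>k\<in>{1..N} - {1}. wt_GP_factor N \<alpha> r0 k (l(0:=s)) (m(0:=y))) * wt_GP_factor N \<alpha> r0 1 (l(0:=s)) (m(0:=y)))"
      unfolding wt_GP_eq_factors prod_split_off[OF finite_atLeastAtMost din] using N0 by (simp add: exp_diff exp_minus divide_inverse)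
    also have "(\<Prod>k\<in>{1..N} - {1}. wt_GP_factor N \<alpha> r0 k (l(0:=s)) (m(0:=y))) = (\<Prod>k\<in>{1..N} - {1}. wt_GP_factor N \<alpha> r0 k l m)"
      by (intro prod.cong refl wt_GP_factor_upd) auto
    also have "wt_GP_factor N \<alpha> r0 1 (l(0:=s)) (m(0:=y)) = f_theta B (l 1 - s) * f_theta B (m 1 - y) * exp (- exp (- (s - m 1)))"
      unfolding wt_GP_factor_def e01 using h01 unfolding up_idx_def low_idx_def by simp
    finally show ?thesis unfolding C_def loc_def by (simp only: mult_ac)
  qed
  have W': "wt_GP N \<alpha> u v r (l(0:=x')) (m(0:=y)) = C * loc' x' y" for x' y
  proof -
    have "wt_GP N \<alpha> u v r (l(0:=x')) (m(0:=y)) = (exp (- u * (x' - y)) * exp (- v * (l N - m N))) *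
        ((\<Prod>k\<in>{1..N} - {1}. wt_GP_factor N \<alpha> r k (l(0:=x')) (m(0:=y))) * wt_GP_factor N \<alpha> r 1 (l(0:=x')) (m(0:=y)))"
      unfolding wt_GP_eq_factors prod_split_off[OF finite_atLeastAtMost din] using N0 by (simp add: exp_diff exp_minus divide_inverse)
    also have "(\<Prod>k\<in>{1..N} - {1}. wt_GP_factor N \<alpha> r k (l(0:=x')) (m(0:=y))) = (\<Prod>k\<in>{1..N} - {1}. wt_GP_factor N \<alpha> r0 k l m)"
      using r by (intro prod.cong refl wt_GP_factor_upd_path) auto
    also have "wt_GP_factor N \<alpha> r 1 (l(0:=x')) (m(0:=y)) = f_theta B (x' - l 1) * f_theta B (y - m 1) * exp (- exp (- (l 1 - y)))"
      unfolding wt_GP_factor_def e1 using h1 unfolding up_idx_def low_idx_def by simp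
    finally show ?thesis unfolding C_def loc'_def by (simp only: mult_ac)
  qed
  have locm: "(\<lambda>q. loc (fst q) (snd q)) \<in> borel_measurable (lborel \<Otimes>\<^sub>M lborel)"
    unfolding loc_def f_theta_def by measurable
  have loc'm: "loc' x' \<in> borel_measurable borel" for x'
    unfolding loc'_def f_theta_def by measurable
  have locnn: "loc s y \<ge> 0" for s y unfolding loc_def f_theta_def by simp
  have id: "(\<integral>\<^sup>+s. (\<integral>\<^sup>+y. ennreal (loc s y) \<partial>lborel) \<partial>lborel)
      * ennreal (f_theta (B + u) (x' - l 1) / Gamma (B + u))
      = (\<integral>\<^sup>+y. ennreal (loc' x' y) \<partial>lborel)"
    unfolding loc_def loc'_def by (rule boundary_box_identity) (use pos th in simp)
  show ?thesis unfolding th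
    by (rule box_identity_lift[where W="wt_GP N \<alpha> u v r0" and W'="wt_GP N \<alpha> u v r" and l=l and m=m and d=0 and C=C and loc=loc and loc'=loc', OF W W' C0 locm loc'm locnn id])
qed

lemma wt_GP_right_flip:
  assumes R0: "down_right_path N r0" and N: "N \<ge> 1"
    and c1: "r0 (N - 1) = (fst (r0 N), snd (r0 N) + 1)"
    and r: "r = r0(N := (fst (r0 N) + 1, snd (r0 N) + 1))"
    and pos: "weight_param N \<alpha> u v (r N) > 0"
  shows "(\<integral>\<^sup>+s. (\<integral>\<^sup>+y. ennreal (wt_GP N \<alpha> u v r0 (l(N:=s)) (m(N:=y))) \<partial>lborel) \<partial>lborel)
                 * ennreal (f_theta (weight_param N \<alpha> u v (r N)) (x' - l (N - 1)) / Gamma (weight_param N \<alpha> u v (r N)))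
               = (\<integral>\<^sup>+y. ennreal (wt_GP N \<alpha> u v r (l(N:=x')) (m(N:=y))) \<partial>lborel)"
proof -
  define A where "A = alpha_ext N \<alpha> (snd (r0 (N - 1)))"
  have fN: "fst (r0 N) = snd (r0 N) + N" using down_right_path_fst[OF R0, of N] by simp
  have dm1: "N - 1 \<noteq> N" "Suc (N - 1) = N" using N by auto
  have h0: "\<not> horizontal r0 N" unfolding horizontal_def using c1 by simp
  have h1: "horizontal r N" unfolding horizontal_def using c1 r dm1 by simp
  have e0: "edge_label N \<alpha> r0 N = A" unfolding edge_label_def A_def using h0 by simp
  have e1: "edge_label N \<alpha> r N = A"
  proof -
    have "fst (r N) = (snd (r0 N) + 1) + N" using r fN by simp
    then have "alpha_ext N \<alpha> (fst (r N)) = alpha_ext N \<alpha> ((snd (r0 N) + 1) + N)" by (simp only:)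
    also have "\<dots> = alpha_ext N \<alpha> (snd (r0 N) + 1)" by (rule alpha_ext_period)
    finally have "alpha_ext N \<alpha> (fst (r N)) = alpha_ext N \<alpha> (snd (r0 N) + 1)" .
    then show ?thesis unfolding edge_label_def A_def using h1 c1 by simp
  qed
  have th: "weight_param N \<alpha> u v (r N) = A + v"
  proof -
    have "fst (r N) = snd (r N) + N" "snd (r N) = snd (r0 N) + 1" using r fN by auto
    then have "fst (r N) \<noteq> snd (r N)" "fst (r N) = snd (r N) + N" using N by auto
    then show ?thesis unfolding weight_param_def Let_def A_def using c1 r by simp
  qed
  have N0: "N \<noteq> 0" using N by simp
  define C where "C = exp (- u * (l 0 - m 0)) * (\<Prod>k\<in>{1..N} - {N}. wt_GP_factor N \<alpha> r0 k l m)"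
  have din: "N \<in> {1..N}" using N by auto
  have C0: "C \<ge> 0" unfolding C_def by (intro mult_nonneg_nonneg prod_nonneg wt_GP_factor_nonneg) auto
  define loc where "loc s y = exp (- v * (s - y)) * (f_theta A (l (N - 1) - s) * f_theta A (m (N - 1) - y) * exp (- exp (- (s - m (N - 1)))))" for s y
  define loc' where "loc' x' y = exp (- v * (x' - y)) * (f_theta A (x' - l (N - 1)) * f_theta A (y - m (N - 1)) * exp (- exp (- (l (N - 1) - y))))" for x' y
  have W: "wt_GP N \<alpha> u v r0 (l(N:=s)) (m(N:=y)) = C * loc s y" for s y
  proof -
    have "wt_GP N \<alpha> u v r0 (l(N:=s)) (m(N:=y)) = (exp (- u * (l 0 - m 0)) * exp (- v * (s - y))) *
        ((\<Prod>k\<in>{1..N} - {N}. wt_GP_factor N \<alpha> r0 k (l(N:=s)) (m(N:=y))) * wt_GP_factor N \<alpha> r0 N (l(N:=s)) (m(N:=y)))"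
      unfolding wt_GP_eq_factors prod_split_off[OF finite_atLeastAtMost din] using N0 by (simp add: exp_diff exp_minus divide_inverse)
    also have "(\<Prod>k\<in>{1..N} - {N}. wt_GP_factor N \<alpha> r0 k (l(N:=s)) (m(N:=y))) = (\<Prod>k\<in>{1..N} - {N}. wt_GP_factor N \<alpha> r0 k l m)"
      by (intro prod.cong refl wt_GP_factor_upd) auto
    also have "wt_GP_factor N \<alpha> r0 N (l(N:=s)) (m(N:=y)) = f_theta A (l (N - 1) - s) * f_theta A (m (N - 1) - y) * exp (- exp (- (s - m (N - 1))))"
      unfolding wt_GP_factor_def e0 using h0 dm1 unfolding up_idx_def low_idx_def by simp
    finally show ?thesis unfolding C_def loc_def by (simp only: mult_ac)
  qed
  have W': "wt_GP N \<alpha> u v r (l(N:=x')) (m(N:=y)) = C * loc' x' y" for x' y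
  proof -
    have "wt_GP N \<alpha> u v r (l(N:=x')) (m(N:=y)) = (exp (- u * (l 0 - m 0)) * exp (- v * (x' - y))) *
        ((\<Prod>k\<in>{1..N} - {N}. wt_GP_factor N \<alpha> r k (l(N:=x')) (m(N:=y))) * wt_GP_factor N \<alpha> r N (l(N:=x')) (m(N:=y)))"
      unfolding wt_GP_eq_factors prod_split_off[OF finite_atLeastAtMost din] using N0 by (simp add: exp_diff exp_minus divide_inverse)
    also have "(\<Prod>k\<in>{1..N} - {N}. wt_GP_factor N \<alpha> r k (l(N:=x')) (m(N:=y))) = (\<Prod>k\<in>{1..N} - {N}. wt_GP_factor N \<alpha> r0 k l m)"
      using r by (intro prod.cong refl wt_GP_factor_upd_path) auto
    also have "wt_GP_factor N \<alpha> r N (l(N:=x')) (m(N:=y)) = f_theta A (x' - l (N - 1)) * f_theta A (y - m (N - 1)) * exp (- exp (- (l (N - 1) - y)))"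
      unfolding wt_GP_factor_def e1 using h1 dm1 unfolding up_idx_def low_idx_def by simp
    finally show ?thesis unfolding C_def loc'_def by (simp only: mult_ac)
  qed
  have locm: "(\<lambda>q. loc (fst q) (snd q)) \<in> borel_measurable (lborel \<Otimes>\<^sub>M lborel)"
    unfolding loc_def f_theta_def by measurable
  have loc'm: "loc' x' \<in> borel_measurable borel" for x'
    unfolding loc'_def f_theta_def by measurable
  have locnn: "loc s y \<ge> 0" for s y unfolding loc_def f_theta_def by simp
  have id: "(\<integral>\<^sup>+s. (\<integral>\<^sup>+y. ennreal (loc s y) \<partial>lborel) \<partial>lborel)
      * ennreal (f_theta (A + v) (x' - l (N - 1)) / Gamma (A + v))
      = (\<integral>\<^sup>+y. ennreal (loc' x' y) \<partial>lborel)"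
    unfolding loc_def loc'_def by (rule boundary_box_identity) (use pos th in simp)
  show ?thesis unfolding th
    by (rule box_identity_lift[where W="wt_GP N \<alpha> u v r0" and W'="wt_GP N \<alpha> u v r" and l=l and m=m and d=N and C=C and loc=loc and loc'=loc', OF W W' C0 locm loc'm locnn id])
qed

section \<open>Free energies\<close>

lemma diag_above_down_right_path:
  assumes "down_right_path N r" "j \<le> N" "snd (p j) \<le> snd (r j)"
  shows "diag_above N p (r j)"
  unfolding diag_above_def
  using down_right_path_in_strip[OF assms(1,2)] down_right_path_fst[OF assms(1,2)] assms(3) by simp

lemma polymer_path_start_index:
  assumes P: "down_right_path N p" and \<pi>: "\<pi> \<in> polymer_paths N p x"
  shows "(THE j. j \<le> N \<and> p j = hd \<pi>) \<le> N"
proof -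
  obtain i where "i \<le> N" "hd \<pi> = p i" using \<pi> unfolding polymer_paths_def path_set_def by auto
  then show ?thesis using down_right_path_the_index[OF P] by simp
qed

lemma polymer_path_in_strip:
  assumes \<pi>: "\<pi> \<in> polymer_paths N p x" and i: "i < length \<pi>"
  shows "\<pi> ! i \<in> strip N"
  using \<pi> i unfolding polymer_paths_def up_right_path_def by auto

lemma measurable_z_poly:
  assumes f: "f \<in> measurable K (lborel_upto N)" and g: "g \<in> measurable K (weight_measure N \<alpha> u v)"
  shows "(\<lambda>k. z_poly N p (f k) (g k) x) \<in> borel_measurable K"
  unfolding z_poly_def
proof (intro borel_measurable_sum borel_measurable_times borel_measurable_prod)
  fix \<pi> assume \<pi>: "\<pi> \<in> polymer_paths N p x"
  show "(\<lambda>k. exp (f k (THE j. j \<le> N \<and> p j = hd \<pi>))) \<in> borel_measurable K"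
    using measurable_compose[OF f measurable_coordinate] by measurable
  fix i assume "i \<in> {1..<length \<pi>}"
  then have "\<pi> ! i \<in> strip N" using polymer_path_in_strip[OF \<pi>] by auto
  then show "(\<lambda>k. g k (\<pi> ! i)) \<in> borel_measurable K"
    using measurable_component_singleton'[OF g[unfolded weight_measure_def] measurable_ident_sets[OF refl]]
    by (simp add: measurable_cong_sets[OF refl sets_inv_gamma])
qed

definition free_energy_vec ::
    "nat \<Rightarrow> (nat \<Rightarrow> nat \<times> nat) \<Rightarrow> (nat \<Rightarrow> nat \<times> nat) \<Rightarrow> (nat \<Rightarrow> real) \<Rightarrow> ((nat \<times> nat) \<Rightarrow> real) \<Rightarrow> nat \<Rightarrow> real" where
  "free_energy_vec N p r lam w = restrict (\<lambda>j. free_energy N p lam w (r j)) {..N}"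

lemma measurable_free_energy_vec:
  assumes "f \<in> measurable K (lborel_upto N)" "g \<in> measurable K (weight_measure N \<alpha> u v)"
  shows "(\<lambda>k. free_energy_vec N p r (f k) (g k)) \<in> measurable K (lborel_upto N)"
  unfolding free_energy_vec_def free_energy_def
  using measurable_z_poly[OF assms] by (intro measurable_restrict) measurable

lemma free_energy_vec_space: "free_energy_vec N p r lam w \<in> space (lborel_upto N)"
  unfolding free_energy_vec_def by (simp add: space_PiM)

lemma free_energy_vec_upd_box:
  assumes R0: "down_right_path N r0" and d: "d \<le> N" and x: "x = (fst (r0 d) + 1, snd (r0 d) + 1)"
  shows "free_energy_vec N p r0 lam (w(x := t)) = free_energy_vec N p r0 lam w"
  unfolding free_energy_vec_def free_energy_def
proof (intro restrict_ext arg_cong[where f=ln] z_poly_cong_below)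
  fix j v assume j: "j \<in> {..N}" and v: "fst v \<le> fst (r0 j)" "snd v \<le> snd (r0 j)"
  have "v \<noteq> x"
  proof (cases "j \<le> d")
    case True
    have "fst (r0 j) \<le> fst (r0 d)" by (rule down_right_path_fst_mono[OF R0 True d])
    then show ?thesis using v x by auto
  next
    case False
    then have "snd (r0 d) \<ge> snd (r0 j)" using down_right_path_snd_antimono[OF R0, of d j] j by auto
    then show ?thesis using v x by auto
  qed
  then show "(w(x := t)) v = w v" by simp
qed

lemma free_energy_vec_add_box:
  assumes N: "N \<ge> 1" and P: "down_right_path N p" and R0: "down_right_path N r0"
    and ge: "\<And>j. j \<le> N \<Longrightarrow> snd (p j) \<le> snd (r0 j)"
    and d: "d \<le> N" and x: "x = (fst (r0 d) + 1, snd (r0 d) + 1)" and r: "r = r0(d := x)"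
    and xs: "x \<in> strip N"
    and Is: "Iset \<subseteq> {..N}" "Iset \<noteq> {}" and inj: "inj_on r0 Iset"
    and pr: "predecessors N x = r0 ` Iset"
    and lam: "lam \<in> space (lborel_upto N)" and wpos: "\<forall>y\<in>strip N. w y > 0"
  shows "free_energy_vec N p r lam w = (free_energy_vec N p r0 lam w)(d := ln (\<Sum>i\<in>Iset. exp (free_energy_vec N p r0 lam w i)) + ln (w x))"
proof
  fix j
  have fI: "finite Iset" using Is(1) finite_subset by auto
  have fd: "fst (r0 d) = snd (r0 d) + d" using down_right_path_fst[OF R0 d] .
  have zpos: "z_poly N p lam w (r0 i) > 0" if "i \<le> N" for i
    using wpos by (intro z_poly_pos[OF N P] diag_above_down_right_path[of N r0 i p, OF R0 that ge[OF that]]) auto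
  show "free_energy_vec N p r lam w j = ((free_energy_vec N p r0 lam w)(d := ln (\<Sum>i\<in>Iset. exp (free_energy_vec N p r0 lam w i)) + ln (w x))) j"
  proof (cases "j = d")
    case False
    then show ?thesis unfolding free_energy_vec_def r by simp
  next
    case True
    have ax: "diag_above N p x" unfolding diag_above_def using xs x fd ge[OF d] by simp
    have nx: "x \<notin> path_set N p"
      using diag_above_not_on_path[OF P ax] x fd ge[OF d] by simp
    have "z_poly N p lam w x = (\<Sum>y\<in>predecessors N x. z_poly N p lam w y) * w x" by (rule z_poly_recursion[OF xs nx])
    also have "(\<Sum>y\<in>predecessors N x. z_poly N p lam w y) = (\<Sum>i\<in>Iset. z_poly N p lam w (r0 i))"
      unfolding pr by (rule sum.reindex[OF inj, unfolded comp_def])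
    also have "\<dots> = (\<Sum>i\<in>Iset. exp (free_energy_vec N p r0 lam w i))"
    proof (intro sum.cong refl)
      fix i assume "i \<in> Iset"
      then have i: "i \<le> N" using Is by auto
      then show "z_poly N p lam w (r0 i) = exp (free_energy_vec N p r0 lam w i)"
        unfolding free_energy_vec_def free_energy_def using zpos[OF i] by simp
    qed
    finally have zx: "z_poly N p lam w x = (\<Sum>i\<in>Iset. exp (free_energy_vec N p r0 lam w i)) * w x" .
    have Spos: "(\<Sum>i\<in>Iset. exp (free_energy_vec N p r0 lam w i)) > 0" using fI Is(2) by (intro sum_pos) auto
    have wx: "w x > 0" using wpos xs by auto
    show ?thesis using True d zx Spos wx unfolding free_energy_vec_def free_energy_def r by (simp add: ln_mult)
  qed
qed

section \<open>Adding one box to the output path\<close>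

definition transports_wt :: "nat \<Rightarrow> (nat \<Rightarrow> real) \<Rightarrow> real \<Rightarrow> real \<Rightarrow> (nat \<Rightarrow> nat \<times> nat) \<Rightarrow> (nat \<Rightarrow> nat \<times> nat) \<Rightarrow> bool" where
  "transports_wt N \<alpha> u v p r \<longleftrightarrow> (\<forall>F \<in> borel_measurable (lborel_upto N).
      (\<integral>\<^sup>+lam. (\<integral>\<^sup>+w. F (free_energy_vec N p r lam w) \<partial>weight_measure N \<alpha> u v) * wt_P N \<alpha> u v p lam \<partial>lborel_upto N)
    = (\<integral>\<^sup>+lam. F lam * wt_P N \<alpha> u v r lam \<partial>lborel_upto N))"

locale strip_polymer =
  fixes N :: nat and \<alpha> :: "nat \<Rightarrow> real" and u v :: real and p :: "nat \<Rightarrow> nat \<times> nat"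
  assumes N_ge_1: "N \<ge> 1"
    and param_pos: "\<And>x. weight_param N \<alpha> u v x > 0"
    and p_path: "down_right_path N p"
begin

sublocale W: prob_space "weight_measure N \<alpha> u v"
  unfolding weight_measure_def using param_pos prob_space_inv_gamma by (intro prob_space_PiM) auto

lemma AE_weight_pos: "AE w in weight_measure N \<alpha> u v. \<forall>y\<in>strip N. w y > 0"
proof -
  have "countable (strip N)" by (rule countable_subset[of _ UNIV]) auto
  then show ?thesis
    unfolding weight_measure_def using param_pos prob_space_inv_gamma AE_inv_gamma_pos
    by (subst AE_ball_countable) (auto intro!: AE_PiM_component)
qed

text \<open>The weight at the new box enters only through \<open>ln (w x)\<close>, which is independent of the old
  free energies and has density \<open>f_theta \<theta> / Gamma \<theta>\<close>, where \<open>\<theta> = weight_param N \<alpha> u v x\<close>.\<close>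
lemma nn_integral_weight_new_box:
  assumes d: "d \<le> N" and x: "x \<in> strip N"
    and [measurable]: "Lf \<in> borel_measurable (lborel_upto N)" "F \<in> borel_measurable (lborel_upto N)"
    and lam: "lam \<in> space (lborel_upto N)"
    and new: "\<And>w. (\<forall>y\<in>strip N. w y > 0) \<Longrightarrow>
        free_energy_vec N p r lam w = (free_energy_vec N p r0 lam w)(d := Lf (free_energy_vec N p r0 lam w) + ln (w x))"
    and old: "\<And>w t. free_energy_vec N p r0 lam (w(x := t)) = free_energy_vec N p r0 lam w"
  shows "(\<integral>\<^sup>+w. F (free_energy_vec N p r lam w) \<partial>weight_measure N \<alpha> u v) =
    (\<integral>\<^sup>+w. (\<integral>\<^sup>+g. ennreal (f_theta (weight_param N \<alpha> u v x) g / Gamma (weight_param N \<alpha> u v x)) *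
        F ((free_energy_vec N p r0 lam w)(d := Lf (free_energy_vec N p r0 lam w) + g)) \<partial>lborel) \<partial>weight_measure N \<alpha> u v)"
proof -
  let ?W = "weight_measure N \<alpha> u v" and ?Mw = "\<lambda>y. inv_gamma (weight_param N \<alpha> u v y)"
  let ?h = "free_energy_vec N p r0 lam" and ?\<theta> = "weight_param N \<alpha> u v x"
  note measurable_upd_lborel_upto[OF d, measurable]
  define H where "H w t = F ((?h w)(d := Lf (?h w) + ln t))" for w t
  have [measurable]: "(\<lambda>k. ?h (fst k)) \<in> measurable (?W \<Otimes>\<^sub>M ?Mw x) (lborel_upto N)"
    using lam by (intro measurable_free_energy_vec) auto
  have [measurable]: "snd \<in> borel_measurable (?W \<Otimes>\<^sub>M ?Mw x)"
    using measurable_snd[of ?W "?Mw x"] by (simp add: measurable_cong_sets[OF refl sets_inv_gamma])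
  have Hm: "(\<lambda>k. H (fst k) (snd k)) \<in> borel_measurable (PiM (strip N) ?Mw \<Otimes>\<^sub>M ?Mw x)"
    unfolding H_def weight_measure_def[symmetric] by measurable
  have "(\<integral>\<^sup>+w. F (free_energy_vec N p r lam w) \<partial>?W) = (\<integral>\<^sup>+w. H w (w x) \<partial>?W)"
    using AE_weight_pos by (rule nn_integral_cong_AE[OF AE_mp]) (auto simp: H_def new)
  also have "\<dots> = (\<integral>\<^sup>+w. (\<integral>\<^sup>+t. H w t \<partial>?Mw x) \<partial>?W)"
    unfolding weight_measure_def
    by (rule nn_integral_PiM_resample[OF _ x Hm]) (use param_pos prob_space_inv_gamma in blast, simp only: H_def old)
  also have "\<dots> = (\<integral>\<^sup>+w. (\<integral>\<^sup>+g. ennreal (f_theta ?\<theta> g / Gamma ?\<theta>) * F ((?h w)(d := Lf (?h w) + g)) \<partial>lborel) \<partial>?W)"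
  proof (intro nn_integral_cong)
    fix w
    have "(\<lambda>t. (?h w)(d := Lf (?h w) + ln t)) \<in> measurable borel (lborel_upto N)"
      using free_energy_vec_space[of N p r0 lam w] by measurable
    then have "(\<lambda>t. H w t) \<in> borel_measurable borel" unfolding H_def by measurable
    then show "(\<integral>\<^sup>+t. H w t \<partial>?Mw x) = (\<integral>\<^sup>+g. ennreal (f_theta ?\<theta> g / Gamma ?\<theta>) * F ((?h w)(d := Lf (?h w) + g)) \<partial>lborel)"
      using nn_integral_inv_gamma_log[OF param_pos] by (simp add: H_def)
  qed
  finally show ?thesis .
qed

lemma transports_wt_add_box:
  assumes d: "d \<le> N" and x: "x \<in> strip N"
    and Lm[measurable]: "Lf \<in> borel_measurable (lborel_upto N)" and Lj: "\<And>l t. Lf (l(d:=t)) = Lf l"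
    and new: "\<And>lam w. lam \<in> space (lborel_upto N) \<Longrightarrow> (\<forall>y\<in>strip N. w y > 0) \<Longrightarrow>
        free_energy_vec N p r lam w = (free_energy_vec N p r0 lam w)(d := Lf (free_energy_vec N p r0 lam w) + ln (w x))"
    and old: "\<And>lam w t. free_energy_vec N p r0 lam (w(x := t)) = free_energy_vec N p r0 lam w"
    and box: "\<And>l m x'. (\<integral>\<^sup>+s. (\<integral>\<^sup>+y. ennreal (wt_GP N \<alpha> u v r0 (l(d:=s)) (m(d:=y))) \<partial>lborel) \<partial>lborel)
                 * ennreal (f_theta (weight_param N \<alpha> u v x) (x' - Lf l) / Gamma (weight_param N \<alpha> u v x))
               = (\<integral>\<^sup>+y. ennreal (wt_GP N \<alpha> u v r (l(d:=x')) (m(d:=y))) \<partial>lborel)"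
    and r0: "transports_wt N \<alpha> u v p r0"
  shows "transports_wt N \<alpha> u v p r"
  unfolding transports_wt_def
proof (intro ballI)
  fix F :: "(nat \<Rightarrow> real) \<Rightarrow> ennreal" assume Fm[measurable]: "F \<in> borel_measurable (lborel_upto N)"
  let ?W = "weight_measure N \<alpha> u v" and ?\<theta> = "weight_param N \<alpha> u v x"
  note measurable_upd_lborel_upto[OF d, measurable]
  define G where "G \<mu> = (\<integral>\<^sup>+g. ennreal (f_theta ?\<theta> g / Gamma ?\<theta>) * F (\<mu>(d := Lf \<mu> + g)) \<partial>lborel)" for \<mu>
  have \<rho>m [measurable]: "(\<lambda>g. f_theta ?\<theta> g / Gamma ?\<theta>) \<in> borel_measurable borel"
    unfolding f_theta_def by measurable
  have "(\<integral>\<^sup>+lam. (\<integral>\<^sup>+w. F (free_energy_vec N p r lam w) \<partial>?W) * wt_P N \<alpha> u v p lam \<partial>lborel_upto N)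
      = (\<integral>\<^sup>+lam. (\<integral>\<^sup>+w. G (free_energy_vec N p r0 lam w) \<partial>?W) * wt_P N \<alpha> u v p lam \<partial>lborel_upto N)"
  proof (intro nn_integral_cong)
    fix lam assume lam: "lam \<in> space (lborel_upto N)"
    show "(\<integral>\<^sup>+w. F (free_energy_vec N p r lam w) \<partial>?W) * wt_P N \<alpha> u v p lam
        = (\<integral>\<^sup>+w. G (free_energy_vec N p r0 lam w) \<partial>?W) * wt_P N \<alpha> u v p lam"
      unfolding G_def using nn_integral_weight_new_box[OF d x Lm Fm lam new[OF lam] old] by simp
  qed
  also have "\<dots> = (\<integral>\<^sup>+lam. G lam * wt_P N \<alpha> u v r0 lam \<partial>lborel_upto N)"
  proof -
    have "G \<in> borel_measurable (lborel_upto N)" unfolding G_def by measurable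
    then show ?thesis using r0 unfolding transports_wt_def by blast
  qed
  also have "\<dots> = (\<integral>\<^sup>+lam. F lam * wt_P N \<alpha> u v r lam \<partial>lborel_upto N)"
    unfolding G_def
  proof (subst mult.commute, rule nn_integral_resample_coordinate[OF d measurable_wt_P measurable_wt_P \<rho>m Lm Fm Lj])
    fix l x' assume l: "l \<in> space (lborel_upto N)"
    show "wt_P N \<alpha> u v r (l(d := x')) =
        (\<integral>\<^sup>+x. wt_P N \<alpha> u v r0 (l(d := x)) \<partial>lborel) * ennreal (f_theta ?\<theta> (x' - Lf l) / Gamma ?\<theta>)"
      unfolding wt_P_def by (rule nn_integral_marginal_coordinate[OF d measurable_wt_GP measurable_wt_GP l box])
  qed
  finally show "(\<integral>\<^sup>+lam. (\<integral>\<^sup>+w. F (free_energy_vec N p r lam w) \<partial>?W) * wt_P N \<alpha> u v p lam \<partial>lborel_upto N)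
      = (\<integral>\<^sup>+lam. F lam * wt_P N \<alpha> u v r lam \<partial>lborel_upto N)" .
qed

lemma transports_wt_corner:
  assumes R0: "down_right_path N r0"
    and ge: "\<And>j. j \<le> N \<Longrightarrow> snd (p j) \<le> snd (r0 j)"
    and d: "0 < d" "d < N"
    and c1: "r0 (d - 1) = (fst (r0 d), snd (r0 d) + 1)"
    and c2: "r0 (d + 1) = (fst (r0 d) + 1, snd (r0 d))"
    and r: "r = r0(d := (fst (r0 d) + 1, snd (r0 d) + 1))"
    and r0_transports: "transports_wt N \<alpha> u v p r0"
  shows "transports_wt N \<alpha> u v p r"
proof -
  define x where "x = (fst (r0 d) + 1, snd (r0 d) + 1)"
  define Lf where "Lf l = ln (exp (l (d - 1)) + exp (l (d + 1)))" for l :: "nat \<Rightarrow> real"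
  have fd: "fst (r0 d) = snd (r0 d) + d" using down_right_path_fst[OF R0] d by auto
  have xs: "x \<in> strip N" unfolding x_def strip_def using fd d by auto
  have dN: "d \<le> N" using d by simp
  have Lm: "Lf \<in> borel_measurable (lborel_upto N)"
  proof -
    note measurable_coordinate[of _ N, measurable]
    show ?thesis unfolding Lf_def by measurable
  qed
  have Lj: "Lf (l(d:=t)) = Lf l" for l t
  proof -
    have "d - 1 \<noteq> d" using d by simp
    then show ?thesis unfolding Lf_def by simp
  qed
  have pr: "predecessors N x = r0 ` {d - 1, d + 1}"
  proof -
    have s1: "r0 (d - 1) \<in> strip N" "r0 (d + 1) \<in> strip N" using down_right_path_in_strip[OF R0] d by auto
    show ?thesis unfolding predecessors_def x_def using s1 c1 c2 by auto
  qed
  have inj: "inj_on r0 {d - 1, d + 1}" using c1 c2 d by (auto simp: inj_on_def)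
  have new: "free_energy_vec N p r lam w = (free_energy_vec N p r0 lam w)(d := Lf (free_energy_vec N p r0 lam w) + ln (w x))"
    if lam: "lam \<in> space (lborel_upto N)" and wpos: "\<forall>y\<in>strip N. w y > 0" for lam w
  proof -
    have "free_energy_vec N p r lam w = (free_energy_vec N p r0 lam w)(d := ln (\<Sum>i\<in>{d - 1, d + 1}. exp (free_energy_vec N p r0 lam w i)) + ln (w x))"
      by (rule free_energy_vec_add_box[OF N_ge_1 p_path R0 ge dN x_def r[folded x_def] xs _ _ inj pr lam wpos]) (use d in auto)
    moreover have "(\<Sum>i\<in>{d - 1, d + 1}. exp (free_energy_vec N p r0 lam w i)) = exp (free_energy_vec N p r0 lam w (d - 1)) + exp (free_energy_vec N p r0 lam w (d + 1))"
      using d by simp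
    ultimately show ?thesis unfolding Lf_def by simp
  qed
  have rd: "r d = x" unfolding r x_def by simp
  show ?thesis
  proof (rule transports_wt_add_box[OF dN xs Lm Lj new free_energy_vec_upd_box[OF R0 dN x_def] _ r0_transports])
    fix l m x'
    show "(\<integral>\<^sup>+s. (\<integral>\<^sup>+y. ennreal (wt_GP N \<alpha> u v r0 (l(d:=s)) (m(d:=y))) \<partial>lborel) \<partial>lborel)
                 * ennreal (f_theta (weight_param N \<alpha> u v x) (x' - Lf l) / Gamma (weight_param N \<alpha> u v x))
               = (\<integral>\<^sup>+y. ennreal (wt_GP N \<alpha> u v r (l(d:=x')) (m(d:=y))) \<partial>lborel)"
      using wt_GP_corner_flip[OF R0 d c1 c2 r param_pos, of l m x'] unfolding rd Lf_def .
  qed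
qed

lemma transports_wt_left:
  assumes R0: "down_right_path N r0"
    and ge: "\<And>j. j \<le> N \<Longrightarrow> snd (p j) \<le> snd (r0 j)"
    and c2: "r0 1 = (fst (r0 0) + 1, snd (r0 0))"
    and r: "r = r0(0 := (fst (r0 0) + 1, snd (r0 0) + 1))"
    and r0_transports: "transports_wt N \<alpha> u v p r0"
  shows "transports_wt N \<alpha> u v p r"
proof -
  define x where "x = (fst (r0 0) + 1, snd (r0 0) + 1)"
  define Lf where "Lf l = l 1" for l :: "nat \<Rightarrow> real"
  have f0: "fst (r0 0) = snd (r0 0)" using down_right_path_fst[OF R0, of 0] by simp
  have xs: "x \<in> strip N" unfolding x_def strip_def using f0 by auto
  have dN: "0 \<le> N" by simp
  have Lm: "Lf \<in> borel_measurable (lborel_upto N)"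
    unfolding Lf_def using measurable_coordinate[of 1 N] by simp
  have Lj: "Lf (l(0:=t)) = Lf l" for l t unfolding Lf_def by simp
  have pr: "predecessors N x = r0 ` {1}"
  proof -
    have s1: "r0 1 \<in> strip N" using down_right_path_in_strip[OF R0] N_ge_1 by auto
    show ?thesis unfolding predecessors_def x_def using s1 c2 f0 by (auto simp: strip_def)
  qed
  have new: "free_energy_vec N p r lam w = (free_energy_vec N p r0 lam w)(0 := Lf (free_energy_vec N p r0 lam w) + ln (w x))"
    if lam: "lam \<in> space (lborel_upto N)" and wpos: "\<forall>y\<in>strip N. w y > 0" for lam w
  proof -
    have "free_energy_vec N p r lam w = (free_energy_vec N p r0 lam w)(0 := ln (\<Sum>i\<in>{1}. exp (free_energy_vec N p r0 lam w i)) + ln (w x))"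
      by (rule free_energy_vec_add_box[OF N_ge_1 p_path R0 ge dN x_def r[folded x_def] xs _ _ _ pr lam wpos]) (use N_ge_1 in auto)
    then show ?thesis unfolding Lf_def by simp
  qed
  have rd: "r 0 = x" unfolding r x_def by simp
  show ?thesis
  proof (rule transports_wt_add_box[OF dN xs Lm Lj new free_energy_vec_upd_box[OF R0 dN x_def] _ r0_transports])
    fix l m x'
    show "(\<integral>\<^sup>+s. (\<integral>\<^sup>+y. ennreal (wt_GP N \<alpha> u v r0 (l(0:=s)) (m(0:=y))) \<partial>lborel) \<partial>lborel)
                 * ennreal (f_theta (weight_param N \<alpha> u v x) (x' - Lf l) / Gamma (weight_param N \<alpha> u v x))
               = (\<integral>\<^sup>+y. ennreal (wt_GP N \<alpha> u v r (l(0:=x')) (m(0:=y))) \<partial>lborel)"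
      using wt_GP_left_flip[OF R0 N_ge_1 c2 r param_pos, of l m x'] unfolding rd Lf_def .
  qed
qed

lemma transports_wt_right:
  assumes R0: "down_right_path N r0"
    and ge: "\<And>j. j \<le> N \<Longrightarrow> snd (p j) \<le> snd (r0 j)"
    and c1: "r0 (N - 1) = (fst (r0 N), snd (r0 N) + 1)"
    and r: "r = r0(N := (fst (r0 N) + 1, snd (r0 N) + 1))"
    and r0_transports: "transports_wt N \<alpha> u v p r0"
  shows "transports_wt N \<alpha> u v p r"
proof -
  define x where "x = (fst (r0 N) + 1, snd (r0 N) + 1)"
  define Lf where "Lf l = l (N - 1)" for l :: "nat \<Rightarrow> real"
  have fN: "fst (r0 N) = snd (r0 N) + N" using down_right_path_fst[OF R0, of N] by simp
  have xs: "x \<in> strip N" unfolding x_def strip_def using fN by auto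
  have dN: "N \<le> N" by simp
  have Lm: "Lf \<in> borel_measurable (lborel_upto N)"
    unfolding Lf_def using measurable_coordinate[of "N - 1" N] by simp
  have Lj: "Lf (l(N:=t)) = Lf l" for l t
  proof -
    have "N - 1 \<noteq> N" using N_ge_1 by simp
    then show ?thesis unfolding Lf_def by simp
  qed
  have pr: "predecessors N x = r0 ` {N - 1}"
  proof -
    have s1: "r0 (N - 1) \<in> strip N" using down_right_path_in_strip[OF R0] by auto
    show ?thesis unfolding predecessors_def x_def using s1 c1 fN by (auto simp: strip_def)
  qed
  have new: "free_energy_vec N p r lam w = (free_energy_vec N p r0 lam w)(N := Lf (free_energy_vec N p r0 lam w) + ln (w x))"
    if lam: "lam \<in> space (lborel_upto N)" and wpos: "\<forall>y\<in>strip N. w y > 0" for lam w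
  proof -
    have "free_energy_vec N p r lam w = (free_energy_vec N p r0 lam w)(N := ln (\<Sum>i\<in>{N - 1}. exp (free_energy_vec N p r0 lam w i)) + ln (w x))"
      by (rule free_energy_vec_add_box[OF N_ge_1 p_path R0 ge dN x_def r[folded x_def] xs _ _ _ pr lam wpos]) auto
    then show ?thesis unfolding Lf_def by simp
  qed
  have rd: "r N = x" unfolding r x_def by simp
  show ?thesis
  proof (rule transports_wt_add_box[OF dN xs Lm Lj new free_energy_vec_upd_box[OF R0 dN x_def] _ r0_transports])
    fix l m x'
    show "(\<integral>\<^sup>+s. (\<integral>\<^sup>+y. ennreal (wt_GP N \<alpha> u v r0 (l(N:=s)) (m(N:=y))) \<partial>lborel) \<partial>lborel)
                 * ennreal (f_theta (weight_param N \<alpha> u v x) (x' - Lf l) / Gamma (weight_param N \<alpha> u v x))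
               = (\<integral>\<^sup>+y. ennreal (wt_GP N \<alpha> u v r (l(N:=x')) (m(N:=y))) \<partial>lborel)"
      using wt_GP_right_flip[OF R0 N_ge_1 c1 r param_pos, of l m x'] unfolding rd Lf_def .
  qed
qed

lemma wt_GP_cong:
  assumes "\<And>j. j \<le> N \<Longrightarrow> r j = r' j"
  shows "wt_GP N \<alpha> u v r = wt_GP N \<alpha> u v r'"
proof (intro ext)
  fix l m
  have "wt_GP_factor N \<alpha> r k = wt_GP_factor N \<alpha> r' k" if "k \<in> {1..N}" for k
    using that assms by (intro wt_GP_factor_cong) auto
  then show "wt_GP N \<alpha> u v r l m = wt_GP N \<alpha> u v r' l m"
    unfolding wt_GP_eq_factors by simp
qed

lemma transports_wt_same:
  assumes eq: "\<And>j. j \<le> N \<Longrightarrow> r j = p j"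
  shows "transports_wt N \<alpha> u v p r"
  unfolding transports_wt_def
proof (intro ballI)
  fix F :: "(nat \<Rightarrow> real) \<Rightarrow> ennreal"
  have h: "free_energy_vec N p r lam w = lam" if lam: "lam \<in> space (lborel_upto N)" for lam w
  proof -
    have "free_energy_vec N p r lam w = restrict lam {..N}"
      unfolding free_energy_vec_def free_energy_def
      by (intro restrict_ext) (simp add: eq z_poly_on_path[OF p_path])
    also have "\<dots> = lam" using lam by (simp add: space_PiM PiE_def extensional_restrict)
    finally show ?thesis .
  qed
  have wt: "wt_P N \<alpha> u v r = wt_P N \<alpha> u v p" unfolding wt_P_def using wt_GP_cong[OF eq] by simp
  show "(\<integral>\<^sup>+lam. (\<integral>\<^sup>+w. F (free_energy_vec N p r lam w) \<partial>weight_measure N \<alpha> u v) * wt_P N \<alpha> u v p lam \<partial>lborel_upto N)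
      = (\<integral>\<^sup>+lam. F lam * wt_P N \<alpha> u v r lam \<partial>lborel_upto N)"
    unfolding wt by (intro nn_integral_cong) (simp add: h W.emeasure_space_1)
qed

text \<open>Induction on the area between \<open>p\<close> and \<open>r\<close>: lowering an outer corner of \<open>r\<close> gives a
  path \<open>r0\<close> from which \<open>r\<close> arises by one of the three moves above.\<close>
lemma transports_wt_diag_above:
  assumes "down_right_path N r" "\<And>j. j \<le> N \<Longrightarrow> snd (p j) \<le> snd (r j)"
  shows "transports_wt N \<alpha> u v p r"
  using assms
proof (induction "\<Sum>j\<le>N. snd (r j)" arbitrary: r rule: less_induct)
  case less
  note R = less.prems(1) and ge = less.prems(2)
  show ?case
  proof (cases "\<exists>j\<le>N. snd (p j) < snd (r j)")
    case False
    then have "snd (r j) = snd (p j)" if "j \<le> N" for j using ge[OF that] that by force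
    then have "r j = p j" if "j \<le> N" for j
      using down_right_path_eq_pair[OF R that] down_right_path_eq_pair[OF p_path that] that by metis
    then show ?thesis by (rule transports_wt_same)
  next
    case True
    obtain d where dN: "d \<le> N" and lt: "snd (p d) < snd (r d)"
      and right: "d < N \<Longrightarrow> r (d + 1) = (fst (r d), snd (r d) - 1)"
      and left: "0 < d \<Longrightarrow> r (d - 1) = (fst (r d) - 1, snd (r d))"
      using outer_corner_exists[OF p_path R True] by blast
    define m where "m = snd (r d)"
    have rd: "r d = (m + d, m)" using down_right_path_eq_pair[OF R dN] unfolding m_def .
    have m: "m \<ge> 1" using lt unfolding m_def by simp
    define r0 where "r0 = r(d := (m + d - 1, m - 1))"
    have R0: "down_right_path N r0"
      using down_right_path_lower_corner[OF R dN _ right left] m rd unfolding r0_def by simp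
    have ge0: "snd (p j) \<le> snd (r0 j)" if "j \<le> N" for j
      using ge[OF that] lt unfolding r0_def m_def by (cases "j = d") auto
    have "(\<Sum>j\<le>N. snd (r0 j)) < (\<Sum>j\<le>N. snd (r j))"
      using dN m rd unfolding r0_def by (intro sum_strict_mono_ex1) auto
    then have IH: "transports_wt N \<alpha> u v p r0" using less.hyps R0 ge0 by blast
    have r: "r = r0(d := (fst (r0 d) + 1, snd (r0 d) + 1))"
      using m rd unfolding r0_def by (auto simp: fun_eq_iff)
    have c2: "r0 (d + 1) = (fst (r0 d) + 1, snd (r0 d))" if "d < N"
      using right[OF that] m rd unfolding r0_def by auto
    have c1: "r0 (d - 1) = (fst (r0 d), snd (r0 d) + 1)" if "0 < d"
      using left[OF that] m rd that unfolding r0_def by auto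
    consider "d = 0" | "d = N" | "0 < d" "d < N" using dN by linarith
    then show ?thesis
    proof cases
      case 1
      then show ?thesis using transports_wt_left[OF R0 ge0 _ _ IH] c2 r N_ge_1 by simp
    next
      case 2
      then show ?thesis using transports_wt_right[OF R0 ge0 _ _ IH] c1 r N_ge_1 by simp
    next
      case 3
      then show ?thesis using transports_wt_corner[OF R0 ge0 _ _ _ _ r IH] c1 c2 by simp
    qed
  qed
qed

lemma transports_wt_path_above:
  assumes Q: "down_right_path N q" and QP: "path_above N p q"
  shows "transports_wt N \<alpha> u v p q"
  using path_above_snd_le[OF p_path Q QP] by (rule transports_wt_diag_above[OF Q])

end

section \<open>Relative coordinates\<close>

definition rel_vec :: "nat \<Rightarrow> (nat \<Rightarrow> real) \<Rightarrow> nat \<Rightarrow> real" where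
  "rel_vec N lam = restrict (\<lambda>j. lam j - lam 0) {1..N}"

definition shift_vec :: "nat \<Rightarrow> real \<Rightarrow> (nat \<Rightarrow> real) \<Rightarrow> nat \<Rightarrow> real" where
  "shift_vec N c x = restrict (\<lambda>j. x j + c) {..N}"

lemma measurable_init_vec: "init_vec \<in> measurable (lborel_1to N) (lborel_upto N)"
proof -
  have "init_vec = (\<lambda>L j. if j = 0 then 0 else L j)" unfolding init_vec_def by (auto simp: fun_eq_iff)
  moreover have "(\<lambda>L j. if j = 0 then 0 else L j) \<in> measurable (lborel_1to N) (lborel_upto N)"
  proof (rule measurable_PiM_single'[where f="\<lambda>j L. if j = 0 then 0 else L j"])
    fix j assume "j \<in> {..N}"
    then show "(\<lambda>L. if j = 0 then 0 else L j) \<in> measurable (lborel_1to N) lborel"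
      by (cases "j = 0") auto
  next
    show "(\<lambda>L j. if j = 0 then 0 else L j) \<in> space (lborel_1to N) \<rightarrow> (\<Pi>\<^sub>E i\<in>{..N}. space lborel)"
      by (auto simp: space_PiM PiE_iff extensional_def)
  qed
  ultimately show ?thesis by simp
qed

lemma measurable_rel_vec: "rel_vec N \<in> measurable (lborel_upto N) (lborel_1to N)"
  unfolding rel_vec_def by (intro measurable_restrict) auto

lemma rel_vec_space: "rel_vec N lam \<in> space (lborel_1to N)"
  unfolding rel_vec_def by (simp add: space_PiM)

lemma shift_vec_init_vec_rel_vec:
  assumes "lam \<in> space (lborel_upto N)"
  shows "lam = shift_vec N (lam 0) (init_vec (rel_vec N lam))"
  using assms unfolding shift_vec_def init_vec_def rel_vec_def
  by (auto simp: fun_eq_iff space_PiM PiE_def extensional_def)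

lemma rel_vec_shift_vec: "rel_vec N (shift_vec N c X) = rel_vec N X"
  unfolding rel_vec_def shift_vec_def by (auto simp: fun_eq_iff)

lemma nn_integral_split_base_point:
  assumes Gm: "(\<lambda>q. G (fst q) (snd q)) \<in> borel_measurable (lborel_1to N \<Otimes>\<^sub>M lborel)"
  shows "(\<integral>\<^sup>+lam. G (rel_vec N lam) (lam 0) \<partial>lborel_upto N) = (\<integral>\<^sup>+L. (\<integral>\<^sup>+y. G L y \<partial>lborel) \<partial>lborel_1to N)"
proof -
  interpret P: product_sigma_finite "\<lambda>_. lborel :: real measure" by (rule product_sigma_finite_lborel)
  interpret S1: sigma_finite_measure "lborel_1to N" by (intro sigma_finite_PiM_lborel) auto
  interpret PL: pair_sigma_finite lborel "lborel_1to N" ..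
  interpret PL2: pair_sigma_finite "lborel_1to N" lborel ..
  have ins: "{..N} = insert 0 {1..N}" by auto
  have Gc: "(\<lambda>z. G (f z) (g z)) \<in> borel_measurable M" if "f \<in> measurable M (lborel_1to N)" "g \<in> borel_measurable M" for M f g
    using measurable_compose[OF measurable_Pair[OF that(1), of g] Gm] that(2) by simp
  have m1: "(\<lambda>lam. G (rel_vec N lam) (lam 0)) \<in> borel_measurable (PiM (insert 0 {1..N}) (\<lambda>_. lborel))"
    using Gc[OF measurable_rel_vec[of N], of "\<lambda>lam. lam 0"] ins by simp
  have "(\<integral>\<^sup>+lam. G (rel_vec N lam) (lam 0) \<partial>lborel_upto N)
      = (\<integral>\<^sup>+x. (\<integral>\<^sup>+y. G (rel_vec N (x(0 := y))) ((x(0 := y)) 0) \<partial>lborel) \<partial>lborel_1to N)"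
    unfolding ins by (rule P.product_nn_integral_insert[OF _ _ m1]) auto
  also have "\<dots> = (\<integral>\<^sup>+x. (\<integral>\<^sup>+y. G (restrict (\<lambda>j. x j + (- y)) {1..N}) y \<partial>lborel) \<partial>lborel_1to N)"
  proof (intro nn_integral_cong)
    fix x :: "nat \<Rightarrow> real" and y :: real
    have "rel_vec N (x(0 := y)) = restrict (\<lambda>j. x j + (- y)) {1..N}" unfolding rel_vec_def by (auto simp: fun_eq_iff)
    then show "G (rel_vec N (x(0 := y))) ((x(0 := y)) 0) = G (restrict (\<lambda>j. x j + (- y)) {1..N}) y" by simp
  qed
  also have "\<dots> = (\<integral>\<^sup>+y. (\<integral>\<^sup>+x. G (restrict (\<lambda>j. x j + (- y)) {1..N}) y \<partial>lborel_1to N) \<partial>lborel)"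
  proof (rule PL.Fubini')
    have "(\<lambda>q. restrict (\<lambda>j. snd q j + (- fst q)) {1..N}) \<in> measurable (lborel \<Otimes>\<^sub>M lborel_1to N) (lborel_1to N)"
      by (intro measurable_restrict) auto
    then show "(\<lambda>(y, x). G (restrict (\<lambda>j. x j + - y) {1..N}) y) \<in> borel_measurable (lborel \<Otimes>\<^sub>M lborel_1to N)"
      using Gc[of _ "lborel \<Otimes>\<^sub>M lborel_1to N" fst] by (simp add: case_prod_beta')
  qed
  also have "\<dots> = (\<integral>\<^sup>+y. (\<integral>\<^sup>+L. G L y \<partial>lborel_1to N) \<partial>lborel)"
  proof (rule nn_integral_cong)
    fix y :: real
    have gm: "(\<lambda>L. G L y) \<in> borel_measurable (lborel_1to N)" using Gc[of "\<lambda>L. L" "lborel_1to N" "\<lambda>_. y"] by simp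
    show "(\<integral>\<^sup>+x. G (restrict (\<lambda>j. x j + (- y)) {1..N}) y \<partial>lborel_1to N) = (\<integral>\<^sup>+L. G L y \<partial>lborel_1to N)"
      using nn_integral_PiM_lborel_shift[OF finite_atLeastAtMost gm, of "-y"] by simp
  qed
  also have "\<dots> = (\<integral>\<^sup>+L. (\<integral>\<^sup>+y. G L y \<partial>lborel) \<partial>lborel_1to N)"
    using Gm by (intro PL2.Fubini') (simp add: case_prod_beta')
  finally show ?thesis .
qed

lemma wt_GP_shift_vec: "wt_GP N \<alpha> u v p (shift_vec N c l) (shift_vec N c m) = wt_GP N \<alpha> u v p l m"
proof -
  have ul: "up_idx p k \<le> N" "low_idx p k \<le> N" if "k \<in> {1..N}" for k
    using that unfolding up_idx_def low_idx_def by auto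
  have "wt_GP_factor N \<alpha> p k (shift_vec N c l) (shift_vec N c m) = wt_GP_factor N \<alpha> p k l m" if "k \<in> {1..N}" for k
    using ul[OF that] unfolding wt_GP_factor_def shift_vec_def by simp
  then have "(\<Prod>k\<in>{1..N}. wt_GP_factor N \<alpha> p k (shift_vec N c l) (shift_vec N c m)) = (\<Prod>k\<in>{1..N}. wt_GP_factor N \<alpha> p k l m)"
    by (intro prod.cong refl) auto
  moreover have "- u * (shift_vec N c l 0 - shift_vec N c m 0) - v * (shift_vec N c l N - shift_vec N c m N)
      = - u * (l 0 - m 0) - v * (l N - m N)" unfolding shift_vec_def by simp
  ultimately show ?thesis unfolding wt_GP_eq_factors by simp
qed

lemma wt_P_shift_vec: "wt_P N \<alpha> u v p (shift_vec N c l) = wt_P N \<alpha> u v p l"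
proof -
  have gm: "(\<lambda>m. ennreal (wt_GP N \<alpha> u v p (shift_vec N c l) m)) \<in> borel_measurable (lborel_upto N)"
    using measurable_compose[OF measurable_Pair[OF measurable_const[of "shift_vec N c l" "lborel_upto N"] measurable_ident_sets[OF refl]] measurable_wt_GP[of N \<alpha> u v p]]
    by (simp add: space_PiM shift_vec_def)
  have "wt_P N \<alpha> u v p (shift_vec N c l) = (\<integral>\<^sup>+m. ennreal (wt_GP N \<alpha> u v p (shift_vec N c l) (restrict (\<lambda>j. m j + c) {..N})) \<partial>lborel_upto N)"
    unfolding wt_P_def using nn_integral_PiM_lborel_shift[OF finite_atMost gm, of c] by simp
  also have "\<dots> = wt_P N \<alpha> u v p l"
    unfolding wt_P_def using wt_GP_shift_vec[of N \<alpha> u v p c l] unfolding shift_vec_def by simp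
  finally show ?thesis .
qed

lemma wt_P_init_vec_rel_vec:
  assumes "lam \<in> space (lborel_upto N)"
  shows "wt_P N \<alpha> u v p lam = wt_P N \<alpha> u v p (init_vec (rel_vec N lam))"
  using wt_P_shift_vec[of N \<alpha> u v p "lam 0" "init_vec (rel_vec N lam)"] shift_vec_init_vec_rel_vec[OF assms] by simp

lemma z_poly_shift:
  assumes P: "down_right_path N p"
  shows "z_poly N p (shift_vec N c lam) w x = exp c * z_poly N p lam w x"
  unfolding z_poly_def sum_distrib_left
proof (intro sum.cong refl)
  fix \<pi> assume \<pi>: "\<pi> \<in> polymer_paths N p x"
  have "(THE j. j \<le> N \<and> p j = hd \<pi>) \<le> N" by (rule polymer_path_start_index[OF P \<pi>])
  then show "exp (shift_vec N c lam (THE j. j \<le> N \<and> p j = hd \<pi>)) * (\<Prod>i = 1..<length \<pi>. w (\<pi> ! i))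
      = exp c * (exp (lam (THE j. j \<le> N \<and> p j = hd \<pi>)) * (\<Prod>i = 1..<length \<pi>. w (\<pi> ! i)))"
    unfolding shift_vec_def by (simp add: exp_add mult_ac)
qed

lemma free_energy_vec_shift_vec:
  assumes N: "N \<ge> 1" and P: "down_right_path N p" and Q: "down_right_path N q"
    and ge: "\<And>j. j \<le> N \<Longrightarrow> snd (p j) \<le> snd (q j)"
    and wpos: "\<forall>y\<in>strip N. w y > 0"
  shows "free_energy_vec N p q (shift_vec N c lam) w = shift_vec N c (free_energy_vec N p q lam w)"
  unfolding free_energy_vec_def shift_vec_def free_energy_def
proof (intro restrict_ext)
  fix j assume j: "j \<in> {..N}"
  have "z_poly N p lam w (q j) > 0"
    using wpos j by (intro z_poly_pos[OF N P] diag_above_down_right_path[of N q j p, OF Q _ ge]) auto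
  then show "ln (z_poly N p (\<lambda>j\<in>{..N}. lam j + c) w (q j)) = (\<lambda>j\<in>{..N}. ln (z_poly N p lam w (q j))) j + c"
    using z_poly_shift[OF P, of c lam w "q j"] j unfolding shift_vec_def by (simp add: ln_mult)
qed

lemma nn_integral_indicator_unit_interval: "(\<integral>\<^sup>+y. indicator {0..1::real} (t + y) \<partial>lborel) = 1"
  using nn_integral_real_affine[of "indicator {0..1::real} :: real \<Rightarrow> ennreal" 1 t] by simp

lemma nn_integral_unit_interval_Fubini:
  assumes "sigma_finite_measure M" and [measurable]: "f \<in> borel_measurable M" "c \<in> borel_measurable M"
  shows "(\<integral>\<^sup>+y. (\<integral>\<^sup>+w. f w * indicator {0..1::real} (c w + y) \<partial>M) \<partial>lborel) = (\<integral>\<^sup>+w. f w \<partial>M)"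
proof -
  interpret pair_sigma_finite lborel M
    using assms(1) by (intro pair_sigma_finite.intro lborel.sigma_finite_measure_axioms)
  have "(\<integral>\<^sup>+y. (\<integral>\<^sup>+w. f w * indicator {0..1::real} (c w + y) \<partial>M) \<partial>lborel)
      = (\<integral>\<^sup>+w. (\<integral>\<^sup>+y. f w * indicator {0..1::real} (c w + y) \<partial>lborel) \<partial>M)"
    by (intro Fubini'[symmetric]) measurable
  then show ?thesis by (simp add: nn_integral_cmult nn_integral_indicator_unit_interval)
qed

context strip_polymer
begin

lemma free_energy_vec_rel_vec:
  assumes Q: "down_right_path N q" and ge: "\<And>j. j \<le> N \<Longrightarrow> snd (p j) \<le> snd (q j)"
    and lam: "lam \<in> space (lborel_upto N)" and wpos: "\<forall>y\<in>strip N. w y > 0"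
  shows "free_energy_vec N p q lam w = shift_vec N (lam 0) (free_energy_vec N p q (init_vec (rel_vec N lam)) w)"
  using shift_vec_init_vec_rel_vec[OF lam] free_energy_vec_shift_vec[OF N_ge_1 p_path Q ge wpos] by metis

lemma transports_wt_rel_vec:
  assumes Q: "down_right_path N q" and ge: "\<And>j. j \<le> N \<Longrightarrow> snd (p j) \<le> snd (q j)"
    and pq: "transports_wt N \<alpha> u v p q" and A[measurable]: "A \<in> sets (lborel_1to N)"
  shows "(\<integral>\<^sup>+L. wt_P N \<alpha> u v p (init_vec L) *
            (\<integral>\<^sup>+w. indicator A (rel_vec N (free_energy_vec N p q (init_vec L) w)) \<partial>weight_measure N \<alpha> u v) \<partial>lborel_1to N)
       = (\<integral>\<^sup>+L. wt_P N \<alpha> u v q (init_vec L) * indicator A L \<partial>lborel_1to N)"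
proof -
  let ?W = "weight_measure N \<alpha> u v" and ?I = "indicator {0..1::real} :: real \<Rightarrow> ennreal"
  define h where "h L w = free_energy_vec N p q (init_vec L) w" for L w
  have h_meas[measurable]: "(\<lambda>k. h (f k) (g k)) \<in> measurable K (lborel_upto N)"
    if "f \<in> measurable K (lborel_1to N)" "g \<in> measurable K ?W" for K f g
    unfolding h_def using measurable_compose[OF that(1) measurable_init_vec] that(2)
    by (rule measurable_free_energy_vec)
  note [measurable] = measurable_rel_vec measurable_coordinate[of _ N] measurable_init_vec
    measurable_compose[OF measurable_init_vec measurable_wt_P]
  define F :: "(nat \<Rightarrow> real) \<Rightarrow> ennreal" where "F lam = indicator A (rel_vec N lam) * ?I (lam 0)" for lam
  define G where "G L y = (\<integral>\<^sup>+w. indicator A (rel_vec N (h L w)) * ?I (h L w 0 + y) \<partial>?W) * wt_P N \<alpha> u v p (init_vec L)"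
    for L y
  define G' where "G' L y = indicator A L * ?I y * wt_P N \<alpha> u v q (init_vec L)" for L :: "nat \<Rightarrow> real" and y :: real
  have inner_m: "(\<lambda>z. indicator A (rel_vec N (h (fst (fst z)) (snd z))) * ?I (h (fst (fst z)) (snd z) 0 + snd (fst z)))
      \<in> borel_measurable ((lborel_1to N \<Otimes>\<^sub>M lborel) \<Otimes>\<^sub>M ?W)"
    by measurable
  have "(\<lambda>z. \<integral>\<^sup>+w. indicator A (rel_vec N (h (fst z) w)) * ?I (h (fst z) w 0 + snd z) \<partial>?W)
      \<in> borel_measurable (lborel_1to N \<Otimes>\<^sub>M lborel)"
    using inner_m by (intro W.borel_measurable_nn_integral) (simp add: case_prod_beta')
  then have Gm: "(\<lambda>z. G (fst z) (snd z)) \<in> borel_measurable (lborel_1to N \<Otimes>\<^sub>M lborel)"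
    unfolding G_def by measurable
  have G'm: "(\<lambda>z. G' (fst z) (snd z)) \<in> borel_measurable (lborel_1to N \<Otimes>\<^sub>M lborel)"
    unfolding G'_def by measurable
  have LHS: "(\<integral>\<^sup>+w. F (free_energy_vec N p q lam w) \<partial>?W) * wt_P N \<alpha> u v p lam = G (rel_vec N lam) (lam 0)"
    if lam: "lam \<in> space (lborel_upto N)" for lam
  proof -
    have "AE w in ?W. F (free_energy_vec N p q lam w) =
        indicator A (rel_vec N (h (rel_vec N lam) w)) * ?I (h (rel_vec N lam) w 0 + lam 0)"
      using AE_weight_pos
      by eventually_elim
        (simp add: F_def h_def free_energy_vec_rel_vec[OF Q ge lam] rel_vec_shift_vec, simp add: shift_vec_def)
    then show ?thesis
      unfolding G_def using wt_P_init_vec_rel_vec[OF lam] by (simp add: nn_integral_cong_AE)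
  qed
  have RHS: "F lam * wt_P N \<alpha> u v q lam = G' (rel_vec N lam) (lam 0)" if "lam \<in> space (lborel_upto N)" for lam
    unfolding F_def G'_def using wt_P_init_vec_rel_vec[OF that] by simp
  have "(\<integral>\<^sup>+lam. G (rel_vec N lam) (lam 0) \<partial>lborel_upto N)
      = (\<integral>\<^sup>+lam. (\<integral>\<^sup>+w. F (free_energy_vec N p q lam w) \<partial>?W) * wt_P N \<alpha> u v p lam \<partial>lborel_upto N)"
    by (intro nn_integral_cong) (simp add: LHS)
  also have "\<dots> = (\<integral>\<^sup>+lam. F lam * wt_P N \<alpha> u v q lam \<partial>lborel_upto N)"
  proof -
    have "F \<in> borel_measurable (lborel_upto N)" unfolding F_def by measurable
    then show ?thesis using pq unfolding transports_wt_def by blast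
  qed
  also have "\<dots> = (\<integral>\<^sup>+lam. G' (rel_vec N lam) (lam 0) \<partial>lborel_upto N)"
    by (intro nn_integral_cong) (simp add: RHS)
  finally have "(\<integral>\<^sup>+lam. G (rel_vec N lam) (lam 0) \<partial>lborel_upto N) = (\<integral>\<^sup>+lam. G' (rel_vec N lam) (lam 0) \<partial>lborel_upto N)" .
  then have eq: "(\<integral>\<^sup>+L. (\<integral>\<^sup>+y. G L y \<partial>lborel) \<partial>lborel_1to N) = (\<integral>\<^sup>+L. (\<integral>\<^sup>+y. G' L y \<partial>lborel) \<partial>lborel_1to N)"
    unfolding nn_integral_split_base_point[OF Gm] nn_integral_split_base_point[OF G'm] .
  have G_int: "(\<integral>\<^sup>+y. G L y \<partial>lborel) = wt_P N \<alpha> u v p (init_vec L) * (\<integral>\<^sup>+w. indicator A (rel_vec N (h L w)) \<partial>?W)"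
    if L: "L \<in> space (lborel_1to N)" for L
  proof -
    have [measurable]: "(\<lambda>w. h L w) \<in> measurable ?W (lborel_upto N)" using L by measurable
    have "(\<integral>\<^sup>+y. G L y \<partial>lborel) = (\<integral>\<^sup>+y. (\<integral>\<^sup>+w. indicator A (rel_vec N (h L w)) * ?I (h L w 0 + y) \<partial>?W) \<partial>lborel)
        * wt_P N \<alpha> u v p (init_vec L)"
      unfolding G_def using inner_m L by (intro nn_integral_multc) measurable
    then show ?thesis
      by (simp add: nn_integral_unit_interval_Fubini[OF W.sigma_finite_measure_axioms] mult.commute)
  qed
  have G'_int: "(\<integral>\<^sup>+y. G' L y \<partial>lborel) = wt_P N \<alpha> u v q (init_vec L) * indicator A L" for L
  proof -
    have "(\<integral>\<^sup>+y. G' L y \<partial>lborel) = (indicator A L * wt_P N \<alpha> u v q (init_vec L)) * (\<integral>\<^sup>+y. ?I (0 + y) \<partial>lborel)"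
      unfolding G'_def by (subst nn_integral_cmult[symmetric]) (auto simp: mult_ac)
    then show ?thesis by (simp add: nn_integral_indicator_unit_interval mult.commute)
  qed
  have "(\<integral>\<^sup>+L. wt_P N \<alpha> u v p (init_vec L) * (\<integral>\<^sup>+w. indicator A (rel_vec N (h L w)) \<partial>?W) \<partial>lborel_1to N)
      = (\<integral>\<^sup>+L. (\<integral>\<^sup>+y. G L y \<partial>lborel) \<partial>lborel_1to N)"
    by (intro nn_integral_cong) (simp add: G_int)
  also have "\<dots> = (\<integral>\<^sup>+L. wt_P N \<alpha> u v q (init_vec L) * indicator A L \<partial>lborel_1to N)"
    unfolding eq G'_int ..
  finally show ?thesis unfolding h_def .
qed

lemma Z_LG_eq:
  assumes Q: "down_right_path N q" and ge: "\<And>j. j \<le> N \<Longrightarrow> snd (p j) \<le> snd (q j)"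
    and pq: "transports_wt N \<alpha> u v p q"
  shows "Z_LG N \<alpha> u v q = Z_LG N \<alpha> u v p"
proof -
  let ?S = "space (lborel_1to N)"
  have "(\<integral>\<^sup>+w. indicator ?S (rel_vec N (free_energy_vec N p q (init_vec L) w)) \<partial>weight_measure N \<alpha> u v) = 1" for L
    using rel_vec_space[of N] by (simp add: W.emeasure_space_1)
  then have "(\<integral>\<^sup>+L. wt_P N \<alpha> u v p (init_vec L) \<partial>lborel_1to N) = (\<integral>\<^sup>+L. wt_P N \<alpha> u v p (init_vec L) *
      (\<integral>\<^sup>+w. indicator ?S (rel_vec N (free_energy_vec N p q (init_vec L) w)) \<partial>weight_measure N \<alpha> u v) \<partial>lborel_1to N)"
    by simp
  also have "\<dots> = (\<integral>\<^sup>+L. wt_P N \<alpha> u v q (init_vec L) * indicator ?S L \<partial>lborel_1to N)"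
    by (rule transports_wt_rel_vec[OF Q ge pq sets.top])
  also have "\<dots> = (\<integral>\<^sup>+L. wt_P N \<alpha> u v q (init_vec L) \<partial>lborel_1to N)"
    by (intro nn_integral_cong) simp
  finally show ?thesis unfolding Z_LG_def by simp
qed

lemma distr_rel_free_energy_P_LG:
  assumes Q: "down_right_path N q" and ge: "\<And>j. j \<le> N \<Longrightarrow> snd (p j) \<le> snd (q j)"
    and pq: "transports_wt N \<alpha> u v p q"
  shows "distr (density (lborel_1to N) (P_LG N \<alpha> u v p) \<Otimes>\<^sub>M weight_measure N \<alpha> u v) (lborel_1to N)
           (\<lambda>(L, w). rel_vec N (free_energy_vec N p q (init_vec L) w))
        = density (lborel_1to N) (P_LG N \<alpha> u v q)"
    (is "distr (?D \<Otimes>\<^sub>M ?W) _ ?\<Psi> = _")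
proof (rule measure_eqI)
  let ?Z = "Z_LG N \<alpha> u v p"
  have wt_m: "(\<lambda>L. wt_P N \<alpha> u v r (init_vec L)) \<in> borel_measurable (lborel_1to N)" for r
    using measurable_compose[OF measurable_init_vec measurable_wt_P] by simp
  have P_LG_p: "P_LG N \<alpha> u v p L = wt_P N \<alpha> u v p (init_vec L) * inverse ?Z" for L
    unfolding P_LG_def divide_ennreal_def ..
  have P_LG_q: "P_LG N \<alpha> u v q L = wt_P N \<alpha> u v q (init_vec L) * inverse ?Z" for L
    using Z_LG_eq[OF Q ge pq] unfolding P_LG_def divide_ennreal_def by simp
  have P_LG_m: "P_LG N \<alpha> u v r \<in> borel_measurable (lborel_1to N)" for r
    unfolding P_LG_def using wt_m[of r] by measurable
  have \<Psi>_m0: "(\<lambda>z. rel_vec N (free_energy_vec N p q (init_vec (fst z)) (snd z))) \<in> measurable (lborel_1to N \<Otimes>\<^sub>M ?W) (lborel_1to N)"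
    using measurable_free_energy_vec[OF measurable_compose[OF measurable_fst measurable_init_vec] measurable_snd]
    by (rule measurable_compose[OF _ measurable_rel_vec])
  have \<Psi>_m: "?\<Psi> \<in> measurable (?D \<Otimes>\<^sub>M ?W) (lborel_1to N)"
    using \<Psi>_m0 measurable_cong_sets[OF sets_pair_measure_cong[OF sets_density refl] refl]
    by (simp add: case_prod_beta')
  fix A assume "A \<in> sets (distr (?D \<Otimes>\<^sub>M ?W) (lborel_1to N) ?\<Psi>)"
  then have A[measurable]: "A \<in> sets (lborel_1to N)" by simp
  have inner_m: "(\<lambda>L. \<integral>\<^sup>+w. indicator A (rel_vec N (free_energy_vec N p q (init_vec L) w)) \<partial>?W) \<in> borel_measurable (lborel_1to N)"
    using measurable_compose[OF \<Psi>_m0 borel_measurable_indicator[OF A]]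
    by (intro W.borel_measurable_nn_integral) (simp add: case_prod_beta')
  let ?B = "?\<Psi> -` A \<inter> space (?D \<Otimes>\<^sub>M ?W)"
  have B: "?B \<in> sets (?D \<Otimes>\<^sub>M ?W)" using measurable_sets[OF \<Psi>_m A] .
  have "emeasure (distr (?D \<Otimes>\<^sub>M ?W) (lborel_1to N) ?\<Psi>) A = emeasure (?D \<Otimes>\<^sub>M ?W) ?B"
    using \<Psi>_m A by (rule emeasure_distr)
  also have "\<dots> = (\<integral>\<^sup>+z. indicator ?B z \<partial>(?D \<Otimes>\<^sub>M ?W))"
    using B by simp
  also have "\<dots> = (\<integral>\<^sup>+L. (\<integral>\<^sup>+w. indicator ?B (L, w) \<partial>?W) \<partial>?D)"
    using B by (intro W.nn_integral_fst[symmetric]) simp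
  also have "\<dots> = (\<integral>\<^sup>+L. (\<integral>\<^sup>+w. indicator A (rel_vec N (free_energy_vec N p q (init_vec L) w)) \<partial>?W) \<partial>?D)"
    by (intro nn_integral_cong) (auto simp: space_pair_measure indicator_def)
  also have "\<dots> = inverse ?Z * (\<integral>\<^sup>+L. wt_P N \<alpha> u v p (init_vec L) *
      (\<integral>\<^sup>+w. indicator A (rel_vec N (free_energy_vec N p q (init_vec L) w)) \<partial>?W) \<partial>lborel_1to N)"
    using P_LG_m inner_m wt_m
    by (simp add: nn_integral_density P_LG_p nn_integral_cmult[symmetric] mult_ac)
  also have "\<dots> = inverse ?Z * (\<integral>\<^sup>+L. wt_P N \<alpha> u v q (init_vec L) * indicator A L \<partial>lborel_1to N)"
    using transports_wt_rel_vec[OF Q ge pq A] by simp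
  also have "\<dots> = (\<integral>\<^sup>+L. P_LG N \<alpha> u v q L * indicator A L \<partial>lborel_1to N)"
    unfolding P_LG_q using wt_m A by (subst nn_integral_cmult[symmetric]) (auto simp: mult_ac)
  also have "\<dots> = emeasure (density (lborel_1to N) (P_LG N \<alpha> u v q)) A"
    using P_LG_m A by (rule emeasure_density[symmetric])
  finally show "emeasure (distr (?D \<Otimes>\<^sub>M ?W) (lborel_1to N) ?\<Psi>) A = emeasure (density (lborel_1to N) (P_LG N \<alpha> u v q)) A" .
qed simp

end

theorem theorem3p13:
  fixes N :: nat and \<alpha> :: "nat \<Rightarrow> real" and u v :: real
    and p q :: "nat \<Rightarrow> nat \<times> nat"
  assumes N: "N \<ge> 1"
    and aa: "\<And>i j. i \<in> {1..N} \<Longrightarrow> j \<in> {1..N} \<Longrightarrow> \<alpha> i + \<alpha> j > 0"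
    and au: "\<And>i. i \<in> {1..N} \<Longrightarrow> \<alpha> i + u > 0"
    and av: "\<And>i. i \<in> {1..N} \<Longrightarrow> \<alpha> i + v > 0"
    and P: "down_right_path N p" and Q: "down_right_path N q"
    and QP: "path_above N p q"
  shows
    "(\<forall>F \<in> borel_measurable (PiM {..N} (\<lambda>_. lborel)).
        (\<integral>\<^sup>+ lam. (\<integral>\<^sup>+ w. F (restrict (\<lambda>j. free_energy N p lam w (q j)) {..N})
                          \<partial>(weight_measure N \<alpha> u v)) * wt_P N \<alpha> u v p lam
           \<partial>(PiM {..N} (\<lambda>_. lborel)))
        = (\<integral>\<^sup>+ lam'. F lam' * wt_P N \<alpha> u v q lam' \<partial>(PiM {..N} (\<lambda>_. lborel))))
     \<and>
     (u + v > 0 \<longrightarrow>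
        distr (density (PiM {1..N} (\<lambda>_. lborel)) (P_LG N \<alpha> u v p) \<Otimes>\<^sub>M weight_measure N \<alpha> u v)
              (PiM {1..N} (\<lambda>_. lborel))
              (\<lambda>(L, w). restrict (\<lambda>j. free_energy N p (init_vec L) w (q j)
                                      - free_energy N p (init_vec L) w (q 0)) {1..N})
        = density (PiM {1..N} (\<lambda>_. lborel)) (P_LG N \<alpha> u v q))"
proof -
  interpret strip_polymer N \<alpha> u v p
    using N P weight_param_pos[OF N aa au av] by unfold_locales
  have pq: "transports_wt N \<alpha> u v p q"
    by (rule transports_wt_path_above[OF Q QP])
  have "(\<lambda>(L, w). restrict (\<lambda>j. free_energy N p (init_vec L) w (q j) - free_energy N p (init_vec L) w (q 0)) {1..N})
      = (\<lambda>(L, w). rel_vec N (free_energy_vec N p q (init_vec L) w))"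
    by (auto simp: fun_eq_iff rel_vec_def free_energy_vec_def)
  with pq distr_rel_free_energy_P_LG[OF Q path_above_snd_le[OF P Q QP] pq] show ?thesis
    unfolding transports_wt_def free_energy_vec_def by simp
qed

end
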